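(* Let $t\in\mathbb{N}_+$ and let $I\colon T_{\mathrm{Graph}}\leadsto T$ be an open interpretation. Then $$\pi^t_I=\begin{cases}\displaystyle\prod_{j=1}^{t-1}\Bigl(1-\frac{j}{\chi(I)-1}\Bigr), & \text{if } \chi(I)\ge 2,\\[2mm] -\infty, & \text{if } \chi(I)\le 1,\end{cases}$$ where, when $\chi(I)=\infty$, the product is interpreted as $1$ (each factor equals $1$), and the empty product (for $t=1$) equals $1$.
   Context: All languages are finite first-order relational languages; each predicate symbol $P$ has an arity $k(P)\in\mathbb{N}_+$. All structures are finite and canonical, i.e. no predicate holds on a tuple with a repeated entry. For a structure $K$, $V(K)$ is its vertex set, $(V)_k$ denotes the set of injective maps $[k]\to V$, and $R_P(K)\subseteq (V(K))_{k(P)}$ is the set of tuples satisfying $P$. A theory is canonical if it is universal (axiomatized by universal formulas) and entails, for each $P$, that $P$ fails on tuples with a repeated entry; all theories are canonical. $\mathcal{M}_n[T]$ is the set of models of $T$ on $n$ vertices up to isomorphism. $T_{\mathrm{Graph}}$ is the theory in the language $\{E\}$ ($E$ binary) whose models are simple graphs ($R_E$ = ordered pairs of adjacent vertices). An open interpretation $I\colon T_1\leadsto T_2$ (of a theory $T_1$ over $\mathcal{L}_1$ in a theory $T_2$ over $\mathcal{L}_2$) assigns to each predicate symbol $P(x_1,\dots,x_k)$ of $\mathcal{L}_1$ a quantifier-free formula $I(P)(x_1,\dots,x_k)$ of $\mathcal{L}_2$, extended to quantifier-free formulas by commuting with connectives, such that for every axiom $\forall\vec x\,F(\vec x)$ of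 $T_1$ we have $T_2\vdash\forall\vec x\, I(F)(\vec x)$. For a model $M$ of $T_2$, $I(M)$ is the model of $T_1$ with $V(I(M))=V(M)$ and $R_P(I(M))=\{\alpha\in(V(M))_{k(P)}: M\models I(P)(\alpha_1,\dots,\alpha_{k(P)})\}$. $K_t$ is the complete graph on $t$ vertices; $T_{n,\ell}$ is the Turán graph: the complete $\ell$-partite graph on $n$ vertices with parts of sizes $\lfloor n/\ell\rfloor$ or $\lceil n/\ell\rceil$. For graphs $G,H$, $G\subseteq H$ means there is an injection $V(G)\to V(H)$ mapping edges to edges. For models $M,N$ with $|M|\le |N|$, $p(M,N)$ is the number of $|M|$-subsets $U\subseteq V(N)$ with $N|_U\cong M$ divided by $\binom{|N|}{|M|}$. The $t$-Turán density is $\pi^t_I=\lim_{n\to\infty}\sup_{N\in\mathcal{M}_n[T]}p(K_t,I(N))$ (with $\sup\varnothing=-\infty$; the sequence is non-increasing for $n\ge t$). The abstract chromatic number is $$\chi(I)=\sup\bigl(\{\ell\in\mathbb{N}_+:\forall n\in\mathbb{N}\ \exists N\in\mathcal{M}_n[T],\ T_{n,\ell}\subseteq I(N)\}\cup\{0\}\bigr)+1\in\mathbb{N}_+\cup\{\infty\}.$$ *)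

theory Defs
  imports Complex_Main "HOL-Library.Extended_Real" "HOL-Library.Extended_Nat"
begin

datatype 'p qf =
    Atom 'p "nat list"
  | Eq nat nat
  | Neg "'p qf"
  | Conj "'p qf" "'p qf"

definition language :: "('p::finite \<Rightarrow> nat) \<Rightarrow> bool" where
  "language ar \<longleftrightarrow> (\<forall>P. ar P > 0)"

fun fv :: "'p qf \<Rightarrow> nat set" where
  "fv (Atom P xs) = set xs"
| "fv (Eq i j) = {i, j}"
| "fv (Neg f) = fv f"
| "fv (Conj f g) = fv f \<union> fv g"

fun wf_qf :: "('p \<Rightarrow> nat) \<Rightarrow> 'p qf \<Rightarrow> bool" where
  "wf_qf ar (Atom P xs) = (length xs = ar P)"
| "wf_qf ar (Eq i j) = True"
| "wf_qf ar (Neg f) = wf_qf ar f"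
| "wf_qf ar (Conj f g) = (wf_qf ar f \<and> wf_qf ar g)"

fun subst :: "(nat \<Rightarrow> nat) \<Rightarrow> 'p qf \<Rightarrow> 'p qf" where
  "subst \<sigma> (Atom P xs) = Atom P (map \<sigma> xs)"
| "subst \<sigma> (Eq i j) = Eq (\<sigma> i) (\<sigma> j)"
| "subst \<sigma> (Neg f) = Neg (subst \<sigma> f)"
| "subst \<sigma> (Conj f g) = Conj (subst \<sigma> f) (subst \<sigma> g)"

text \<open>A structure: vertex set V and, for each predicate P, the set R_P of tuples
  (lists of length ar P) satisfying P.\<close>

type_synonym ('p, 'v) struc = "'v set \<times> ('p \<Rightarrow> 'v list set)"

definition is_struc :: "('p \<Rightarrow> nat) \<Rightarrow> ('p, 'v) struc \<Rightarrow> bool" where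
  "is_struc ar M \<longleftrightarrow> (\<forall>P. \<forall>xs \<in> snd M P. length xs = ar P \<and> set xs \<subseteq> fst M)"

fun sat :: "('p, 'v) struc \<Rightarrow> (nat \<Rightarrow> 'v) \<Rightarrow> 'p qf \<Rightarrow> bool" where
  "sat M \<rho> (Atom P xs) = (map \<rho> xs \<in> snd M P)"
| "sat M \<rho> (Eq i j) = (\<rho> i = \<rho> j)"
| "sat M \<rho> (Neg f) = (\<not> sat M \<rho> f)"
| "sat M \<rho> (Conj f g) = (sat M \<rho> f \<and> sat M \<rho> g)"

text \<open>A universal theory is a set of quantifier-free formulas, each read as
  its universal closure.\<close>

definition is_model :: "('p \<Rightarrow> nat) \<Rightarrow> 'p qf set \<Rightarrow> ('p, 'v) struc \<Rightarrow> bool" where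
  "is_model ar T M \<longleftrightarrow> is_struc ar M \<and>
     (\<forall>f \<in> T. \<forall>\<rho>. range \<rho> \<subseteq> fst M \<longrightarrow> sat M \<rho> f)"

text \<open>Semantic entailment of a universal sentence (over all countable structures;
  by completeness and downward Loewenheim-Skolem this is provability).\<close>

definition entails :: "('p \<Rightarrow> nat) \<Rightarrow> 'p qf set \<Rightarrow> 'p qf \<Rightarrow> bool" where
  "entails ar T f \<longleftrightarrow>
     (\<forall>M :: ('p, nat) struc. is_model ar T M \<longrightarrow> (\<forall>\<rho>. range \<rho> \<subseteq> fst M \<longrightarrow> sat M \<rho> f))"

definition canonical_theory :: "('p \<Rightarrow> nat) \<Rightarrow> 'p qf set \<Rightarrow> bool" where
  "canonical_theory ar T \<longleftrightarrow> (\<forall>f \<in> T. wf_qf ar f) \<and>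
     (\<forall>P i j. i < j \<and> j < ar P \<longrightarrow>
        entails ar T (Neg (Conj (Eq i j) (Atom P [0..<ar P]))))"

fun translate :: "('p1 \<Rightarrow> 'p2 qf) \<Rightarrow> 'p1 qf \<Rightarrow> 'p2 qf" where
  "translate I (Atom P xs) = subst (\<lambda>i. xs ! i) (I P)"
| "translate I (Eq i j) = Eq i j"
| "translate I (Neg f) = Neg (translate I f)"
| "translate I (Conj f g) = Conj (translate I f) (translate I g)"

definition open_interp ::
  "('p1 \<Rightarrow> nat) \<Rightarrow> ('p2 \<Rightarrow> nat) \<Rightarrow> 'p1 qf set \<Rightarrow> 'p2 qf set \<Rightarrow> ('p1 \<Rightarrow> 'p2 qf) \<Rightarrow> bool" where
  "open_interp ar1 ar2 T1 T2 I \<longleftrightarrow>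
     (\<forall>P. wf_qf ar2 (I P) \<and> fv (I P) \<subseteq> {..<ar1 P}) \<and>
     (\<forall>F \<in> T1. entails ar2 T2 (translate I F))"

definition interp :: "('p1 \<Rightarrow> nat) \<Rightarrow> ('p1 \<Rightarrow> 'p2 qf) \<Rightarrow> ('p2, 'v) struc \<Rightarrow> ('p1, 'v) struc" where
  "interp ar1 I M = (fst M, \<lambda>P. {xs. length xs = ar1 P \<and> distinct xs \<and> set xs \<subseteq> fst M \<and>
                                       sat M (\<lambda>i. xs ! i) (I P)})"

text \<open>Language of graphs: a single binary predicate E (the unique element of unit).\<close>

definition ar_graph :: "unit \<Rightarrow> nat" where
  "ar_graph P = 2"

definition T_Graph :: "unit qf set" where
  "T_Graph = {Neg (Atom () [0, 0]), Neg (Conj (Atom () [0, 1]) (Neg (Atom () [1, 0])))}"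

definition complete_graph :: "nat \<Rightarrow> (unit, nat) struc" where
  "complete_graph t = ({0..<t}, \<lambda>_. {[a, b] | a b. a < t \<and> b < t \<and> a \<noteq> b})"

text \<open>Turan graph: complete l-partite graph on n vertices, parts = residue classes mod l
  (sizes floor(n/l) or ceil(n/l)).\<close>

definition turan_graph :: "nat \<Rightarrow> nat \<Rightarrow> (unit, nat) struc" where
  "turan_graph n l = ({0..<n}, \<lambda>_. {[a, b] | a b. a < n \<and> b < n \<and> a mod l \<noteq> b mod l})"

definition subgraph :: "(unit, 'v) struc \<Rightarrow> (unit, 'w) struc \<Rightarrow> bool" where
  "subgraph G H \<longleftrightarrow> (\<exists>f. inj_on f (fst G) \<and> f ` fst G \<subseteq> fst H \<and>
      (\<forall>a b. [a, b] \<in> snd G () \<longrightarrow> [f a, f b] \<in> snd H ()))"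

definition restrict_struc :: "('p, 'v) struc \<Rightarrow> 'v set \<Rightarrow> ('p, 'v) struc" where
  "restrict_struc N U = (U, \<lambda>P. {xs \<in> snd N P. set xs \<subseteq> U})"

definition isomorphic :: "('p, 'v) struc \<Rightarrow> ('p, 'w) struc \<Rightarrow> bool" where
  "isomorphic M N \<longleftrightarrow> (\<exists>f. bij_betw f (fst M) (fst N) \<and>
      (\<forall>P xs. set xs \<subseteq> fst M \<longrightarrow> (xs \<in> snd M P \<longleftrightarrow> map f xs \<in> snd N P)))"

definition ind_density :: "('p, 'v) struc \<Rightarrow> ('p, 'w) struc \<Rightarrow> real" where
  "ind_density M N =
     real (card {U. U \<subseteq> fst N \<and> card U = card (fst M) \<and> isomorphic (restrict_struc N U) M})
     / real (card (fst N) choose card (fst M))"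

text \<open>M_n[T], represented by the models on vertex set {0..<n} (one representative per
  isomorphism class suffices for all quantities below, which are isomorphism-invariant).\<close>

definition models_n :: "('p \<Rightarrow> nat) \<Rightarrow> 'p qf set \<Rightarrow> nat \<Rightarrow> ('p, nat) struc set" where
  "models_n ar T n = {M. is_model ar T M \<and> fst M = {0..<n}}"

definition turan_seq :: "('p \<Rightarrow> nat) \<Rightarrow> 'p qf set \<Rightarrow> (unit \<Rightarrow> 'p qf) \<Rightarrow> nat \<Rightarrow> nat \<Rightarrow> ereal" where
  "turan_seq ar T I t n =
     Sup ((\<lambda>N. ereal (ind_density (complete_graph t) (interp ar_graph I N))) ` models_n ar T n)"

definition chi :: "('p \<Rightarrow> nat) \<Rightarrow> 'p qf set \<Rightarrow> (unit \<Rightarrow> 'p qf) \<Rightarrow> enat" where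
  "chi ar T I = Sup (insert 0 (enat ` {l. l \<ge> 1 \<and>
       (\<forall>n. \<exists>N \<in> models_n ar T n. subgraph (turan_graph n l) (interp ar_graph I N))})) + 1"

end

theory Submission
  imports Defs "HOL-Library.FuncSet" "HOL-Combinatorics.Transposition"
begin

text \<open>Write \<open>G(N)\<close> for the graph \<open>I(N)\<close> and let \<open>r + 1 = \<chi>(I)\<close>. For every \<open>n\<close> some model \<open>N\<close> of
  size \<open>n\<close> has \<open>T(n, r) \<subseteq> G(N)\<close>, and the \<open>t\<close>-clique density of \<open>T(n, r)\<close> tends to
  \<open>\<Prod>j<t. 1 - j / r\<close>; this is the lower bound. For the upper bound, some size \<open>n0\<close> has no model
  with \<open>T(n0, r + 1) \<subseteq> G(N)\<close>, while models are closed under induced substructures. A graph whose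
  \<open>t\<close>-clique density exceeds the limit by \<open>\<epsilon>\<close> contains a blow-up of \<open>K\<^sub>r\<^sub>+\<^sub>1\<close> with parts of size
  \<open>n0\<close> (Erd\H{o}s--Stone for cliques: supersaturation, then Erd\H{o}s's theorem on complete partite
  hypergraphs), and restricting the model to that blow-up gives a contradiction. Supersaturation
  rests on the clique count of \<open>K\<^sub>r\<^sub>+\<^sub>1\<close>-free graphs, obtained from the Motzkin--Straus argument and
  Maclaurin's inequality. If \<open>\<chi>(I) = \<infinity>\<close>, arbitrarily fine Tur\'an graphs occur and the density is
  eventually \<open>1\<close>; if \<open>\<chi>(I) = 1\<close>, even the edgeless \<open>T(n, 1)\<close> fails, so large models do not exist.\<close>

definition ksubsets :: "'a set \<Rightarrow> nat \<Rightarrow> 'a set set" where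
  "ksubsets V k = {K. K \<subseteq> V \<and> card K = k}"

lemma finite_ksubsets: "finite V \<Longrightarrow> finite (ksubsets V k)"
  unfolding ksubsets_def by (rule finite_subset[of _ "Pow V"]) auto

lemma card_ksubsets: "finite V \<Longrightarrow> card (ksubsets V k) = card V choose k"
  unfolding ksubsets_def by (rule n_subsets)

lemma card_ksubsets_supset:
  assumes fin: "finite V" and KV: "K \<subseteq> V" and km: "card K \<le> m"
  shows "card {W \<in> ksubsets V m. K \<subseteq> W} = (card V - card K) choose (m - card K)"
proof -
  have fK: "finite K" using fin KV finite_subset by blast
  have "bij_betw (\<lambda>W. W - K) {W \<in> ksubsets V m. K \<subseteq> W} (ksubsets (V - K) (m - card K))"
  proof (rule bij_betw_byWitness[where f' = "\<lambda>U. U \<union> K"])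
    show "(\<lambda>W. W - K) ` {W \<in> ksubsets V m. K \<subseteq> W} \<subseteq> ksubsets (V - K) (m - card K)"
      using fin fK by (auto simp: ksubsets_def card_Diff_subset intro: finite_subset)
    have "card (U \<union> K) = m" if "U \<subseteq> V - K" "card U = m - card K" for U
      using that fin fK km by (subst card_Un_disjoint) (auto intro: finite_subset)
    then show "(\<lambda>U. U \<union> K) ` ksubsets (V - K) (m - card K) \<subseteq> {W \<in> ksubsets V m. K \<subseteq> W}"
      using KV by (auto simp: ksubsets_def)
  qed (auto simp: ksubsets_def)
  then have "card {W \<in> ksubsets V m. K \<subseteq> W} = card (ksubsets (V - K) (m - card K))"
    by (rule bij_betw_same_card)
  also have "\<dots> = (card V - card K) choose (m - card K)"
    using fin KV by (simp add: card_ksubsets card_Diff_subset fK)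
  finally show ?thesis .
qed

lemma sum_card_filter_swap:
  assumes "finite A" "finite B"
  shows "(\<Sum>a\<in>A. card {b \<in> B. R a b}) = (\<Sum>b\<in>B. card {a \<in> A. R a b})"
proof -
  have card_filter: "card {b \<in> B. P b} = (\<Sum>b\<in>B. if P b then 1 else 0)" if "finite B" for B and P :: "'c \<Rightarrow> bool"
    using sum.inter_filter[OF that, of "\<lambda>_. 1::nat" P] by simp
  show ?thesis
    using assms by (simp add: card_filter sum.swap[of _ B A])
qed

lemma ex_ge_average:
  fixes f :: "'a \<Rightarrow> real"
  assumes "finite A" "A \<noteq> {}" "X \<le> (\<Sum>a\<in>A. f a)"
  shows "\<exists>a\<in>A. X \<le> f a * real (card A)"
proof (rule ccontr)
  assume "\<not> ?thesis"
  then have "(\<Sum>a\<in>A. f a) * real (card A) < (\<Sum>a\<in>A. X)"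
    using assms(1,2) unfolding sum_distrib_right by (intro sum_strict_mono) auto
  also have "\<dots> = X * real (card A)"
    by simp
  finally show False
    using assms(3) by (simp add: mult_right_mono leD)
qed

section \<open>Maclaurin's inequality\<close>

definition esym :: "'a set \<Rightarrow> nat \<Rightarrow> ('a \<Rightarrow> real) \<Rightarrow> real" where
  "esym S k x = (\<Sum>K\<in>ksubsets S k. \<Prod>v\<in>K. x v)"

lemma prod_split_pair:
  fixes y :: "'a \<Rightarrow> 'b::comm_monoid_mult"
  assumes "finite L" "a \<noteq> b"
  shows "(\<Prod>v\<in>L. y v) = (if a \<in> L then y a else 1) * (if b \<in> L then y b else 1) * (\<Prod>v\<in>L - {a, b}. y v)"
proof -
  have "(\<Prod>v\<in>L. y v) = (\<Prod>v\<in>L \<inter> {a, b}. y v) * (\<Prod>v\<in>L - {a, b}. y v)"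
    using assms(1) by (rule prod.Int_Diff)
  moreover have "(\<Prod>v\<in>L \<inter> {a, b}. y v) = (if a \<in> L then y a else 1) * (if b \<in> L then y b else 1)"
    using assms(2) by (cases "a \<in> L"; cases "b \<in> L") (auto simp: Int_insert_right)
  ultimately show ?thesis by simp
qed

text \<open>Pairing each \<open>K\<close> with its image under the transposition of \<open>a\<close> and \<open>b\<close>, the contribution
  of a pair is a nonnegative combination of \<open>1\<close>, \<open>x a + x b\<close> and \<open>x a * x b\<close>.\<close>

lemma sum_prod_le_smoothing:
  fixes x x' :: "'a \<Rightarrow> real"
  assumes fin: "finite F" and closed: "\<And>K. K \<in> F \<Longrightarrow> transpose a b ` K \<in> F"
    and finK: "\<And>K. K \<in> F \<Longrightarrow> finite K" and ab: "a \<noteq> b" and nonneg: "\<And>v. x v \<ge> 0"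
    and other: "\<And>v. v \<noteq> a \<Longrightarrow> v \<noteq> b \<Longrightarrow> x' v = x v"
    and sum: "x' a + x' b = x a + x b" and prod: "x a * x b \<le> x' a * x' b"
  shows "(\<Sum>K\<in>F. \<Prod>v\<in>K. x v) \<le> (\<Sum>K\<in>F. \<Prod>v\<in>K. x' v)"
proof -
  let ?t = "\<lambda>K. transpose a b ` K"
  have invol: "?t (?t K) = K" for K
    by (simp add: image_comp)
  have "bij_betw ?t F F"
    by (rule bij_betw_byWitness[where f' = ?t]) (auto simp: closed invol)
  then have reindex: "(\<Sum>K\<in>F. g (?t K)) = (\<Sum>K\<in>F. g K)" for g :: "'a set \<Rightarrow> real"
    using sum.reindex_bij_betw by blast
  have pair: "(\<Prod>v\<in>K. x v) + (\<Prod>v\<in>?t K. x v) \<le> (\<Prod>v\<in>K. x' v) + (\<Prod>v\<in>?t K. x' v)"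
    if "K \<in> F" for K
  proof -
    let ?P = "\<Prod>v\<in>K - {a, b}. x v"
    have fK: "finite K" "finite (?t K)" using finK that by auto
    have rest: "(\<Prod>v\<in>K - {a, b}. x' v) = ?P"
      by (rule prod.cong) (auto simp: other)
    have tK: "?t K - {a, b} = K - {a, b}" "a \<in> ?t K \<longleftrightarrow> b \<in> K" "b \<in> ?t K \<longleftrightarrow> a \<in> K"
      using ab by (auto simp: transpose_def)
    have "x a * x b * ?P \<le> x' a * x' b * ?P"
      by (rule mult_right_mono[OF prod]) (simp add: prod_nonneg nonneg)
    moreover have "x a * ?P + x b * ?P = x' a * ?P + x' b * ?P"
      using sum by (metis distrib_right)
    ultimately show ?thesis
      unfolding prod_split_pair[OF fK(1) ab] prod_split_pair[OF fK(2) ab] tK rest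
      by (cases "a \<in> K"; cases "b \<in> K") (simp_all add: algebra_simps)
  qed
  have "2 * (\<Sum>K\<in>F. \<Prod>v\<in>K. x v) = (\<Sum>K\<in>F. (\<Prod>v\<in>K. x v) + (\<Prod>v\<in>?t K. x v))"
    by (simp add: sum.distrib reindex)
  also have "\<dots> \<le> (\<Sum>K\<in>F. (\<Prod>v\<in>K. x' v) + (\<Prod>v\<in>?t K. x' v))"
    by (rule sum_mono) (rule pair)
  also have "\<dots> = 2 * (\<Sum>K\<in>F. \<Prod>v\<in>K. x' v)"
    by (simp add: sum.distrib reindex)
  finally show ?thesis by simp
qed

lemma esym_const:
  assumes "finite S" "\<And>v. v \<in> S \<Longrightarrow> x v = c"
  shows "esym S k x = real (card S choose k) * c ^ k"
proof -
  have "esym S k x = (\<Sum>K\<in>ksubsets S k. c ^ k)"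
    unfolding esym_def by (rule sum.cong) (auto simp: assms(2) subset_iff ksubsets_def)
  then show ?thesis
    using card_ksubsets[OF assms(1)] by simp
qed

lemma esym_le_smoothing:
  fixes x :: "'a \<Rightarrow> real"
  assumes fin: "finite S" and ab: "a \<in> S" "b \<in> S" "a \<noteq> b" and nonneg: "\<And>v. x v \<ge> 0"
    and sum: "p + q = x a + x b" and prod: "x a * x b \<le> p * q"
  shows "esym S k x \<le> esym S k (x(a := p, b := q))"
  unfolding esym_def
proof (rule sum_prod_le_smoothing[OF finite_ksubsets[OF fin] _ _ ab(3) nonneg])
  show "transpose a b ` K \<in> ksubsets S k" if "K \<in> ksubsets S k" for K
  proof -
    have "transpose a b ` K \<subseteq> S"
      using that ab by (auto simp: ksubsets_def transpose_def)
    then show ?thesis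
      using that by (simp add: ksubsets_def card_image)
  qed
  show "finite K" if "K \<in> ksubsets S k" for K
    using that fin by (auto simp: ksubsets_def intro: finite_subset)
qed (use ab(3) sum prod in auto)

lemma ex_below_and_above_mean:
  fixes x :: "'a \<Rightarrow> real"
  assumes fin: "finite S" and sum: "(\<Sum>v\<in>S. x v) = (\<Sum>v\<in>S. m)" and v0: "v0 \<in> S" "x v0 \<noteq> m"
  shows "\<exists>a\<in>S. x a < m" "\<exists>b\<in>S. m < x b"
proof (rule_tac [!] ccontr)
  assume "\<not> (\<exists>a\<in>S. x a < m)"
  then have "\<forall>v\<in>S. m \<le> x v" "m < x v0" using v0 by (auto simp: not_less less_le)
  then have "(\<Sum>v\<in>S. m) < (\<Sum>v\<in>S. x v)"
    using v0(1) by (intro sum_strict_mono_ex1[OF fin]) auto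
  then show False using sum by simp
next
  assume "\<not> (\<exists>b\<in>S. m < x b)"
  then have "\<forall>v\<in>S. x v \<le> m" "x v0 < m" using v0 by (auto simp: not_less less_le)
  then have "(\<Sum>v\<in>S. x v) < (\<Sum>v\<in>S. m)"
    using v0(1) by (intro sum_strict_mono_ex1[OF fin]) auto
  then show False using sum by simp
qed

lemma sum_fun_upd_pair:
  fixes x :: "'a \<Rightarrow> 'b::ab_group_add"
  assumes "finite S" "a \<in> S" "b \<in> S" "a \<noteq> b"
  shows "(\<Sum>v\<in>S. (x(a := p, b := q)) v) = (\<Sum>v\<in>S. x v) - x a - x b + p + q"
proof -
  have split: "sum y S = y a + y b + sum y (S - {a, b})" for y :: "'a \<Rightarrow> 'b"
    using assms by (simp add: sum.remove[of S a] sum.remove[of "S - {a}" b] Diff_insert2[symmetric] insert_commute)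
  have "sum (x(a := p, b := q)) (S - {a, b}) = sum x (S - {a, b})"
    by (rule sum.cong) auto
  then show ?thesis
    unfolding split[of x] split[of "x(a := p, b := q)"] using assms(4) by (simp add: algebra_simps)
qed

text \<open>One smoothing step towards the uniform distribution: move a coordinate below the mean up to
  the mean, compensating with a coordinate above the mean.\<close>

lemma esym_smoothing_step:
  fixes x :: "'a \<Rightarrow> real" and S :: "'a set"
  defines "m \<equiv> 1 / real (card S)"
  assumes fin: "finite S" and nonneg: "\<And>v. x v \<ge> 0" and sum1: "(\<Sum>v\<in>S. x v) = 1"
    and v0: "v0 \<in> S" "x v0 \<noteq> m"
  obtains x' where "\<And>v. x' v \<ge> 0" "(\<Sum>v\<in>S. x' v) = 1"
    "card {v \<in> S. x' v \<noteq> m} < card {v \<in> S. x v \<noteq> m}" "esym S k x \<le> esym S k x'"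
proof -
  have "(\<Sum>v\<in>S. x v) = (\<Sum>v\<in>S. m)"
    using v0 fin sum1 by (auto simp: m_def)
  from ex_below_and_above_mean[OF fin this v0]
  obtain a b where a: "a \<in> S" "x a < m" and b: "b \<in> S" "m < x b"
    by blast
  have ab: "a \<noteq> b" using a b by auto
  define x' where "x' = x(a := m, b := x a + x b - m)"
  show thesis
  proof
    show "x' v \<ge> 0" for v
      using nonneg[of v] nonneg[of a] b(2) by (auto simp: x'_def m_def)
    show "(\<Sum>v\<in>S. x' v) = 1"
      using sum_fun_upd_pair[OF fin a(1) b(1) ab, of x m "x a + x b - m"] sum1
      unfolding x'_def by simp
    have "{v \<in> S. x' v \<noteq> m} \<subseteq> {v \<in> S. x v \<noteq> m} - {a}"
      using a b ab by (auto simp: x'_def)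
    then have "card {v \<in> S. x' v \<noteq> m} \<le> card ({v \<in> S. x v \<noteq> m} - {a})"
      using fin by (intro card_mono) auto
    also have "\<dots> < card {v \<in> S. x v \<noteq> m}"
      using a fin by (intro card_Diff1_less) auto
    finally show "card {v \<in> S. x' v \<noteq> m} < card {v \<in> S. x v \<noteq> m}" .
    have "m * (x a + x b - m) - x a * x b = (m - x a) * (x b - m)"
      by (simp add: algebra_simps)
    then have "x a * x b \<le> m * (x a + x b - m)"
      using a(2) b(2) by (smt (verit) mult_nonneg_nonneg)
    then show "esym S k x \<le> esym S k x'"
      unfolding x'_def using fin a(1) b(1) ab nonneg by (intro esym_le_smoothing) auto
  qed
qed

lemma maclaurin_esym:
  assumes fin: "finite S" and ne: "S \<noteq> {}" and nonneg: "\<And>v. x v \<ge> 0" and sum1: "(\<Sum>v\<in>S. x v) = 1"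
  shows "esym S k x \<le> real (card S choose k) / real (card S) ^ k"
  using nonneg sum1
proof (induction "card {v \<in> S. x v \<noteq> 1 / real (card S)}" arbitrary: x rule: less_induct)
  case less
  show ?case
  proof (cases "\<forall>v\<in>S. x v = 1 / real (card S)")
    case True
    then have "esym S k x = real (card S choose k) * (1 / real (card S)) ^ k"
      by (intro esym_const[OF fin]) auto
    then show ?thesis
      by (simp add: power_divide)
  next
    case False
    then obtain v0 where "v0 \<in> S" "x v0 \<noteq> 1 / real (card S)" by blast
    with esym_smoothing_step[OF fin less.prems, of v0 k] obtain x' where x': "\<And>v. x' v \<ge> 0" "(\<Sum>v\<in>S. x' v) = 1"
      "card {v \<in> S. x' v \<noteq> 1 / real (card S)} < card {v \<in> S. x v \<noteq> 1 / real (card S)}"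
      "esym S k x \<le> esym S k x'"
      by blast
    have "esym S k x' \<le> real (card S choose k) / real (card S) ^ k"
      by (rule less.hyps[OF x'(3) x'(1) x'(2)])
    with x'(4) show ?thesis
      by linarith
  qed
qed

section \<open>Cliques and the clique polynomial\<close>

definition clique :: "('a \<Rightarrow> 'a \<Rightarrow> bool) \<Rightarrow> 'a set \<Rightarrow> bool" where
  "clique G K \<longleftrightarrow> (\<forall>a\<in>K. \<forall>b\<in>K. a \<noteq> b \<longrightarrow> G a b)"

definition cliques :: "('a \<Rightarrow> 'a \<Rightarrow> bool) \<Rightarrow> 'a set \<Rightarrow> nat \<Rightarrow> 'a set set" where
  "cliques G V k = {K \<in> ksubsets V k. clique G K}"

lemma cliques_subset_ksubsets: "cliques G V k \<subseteq> ksubsets V k"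
  by (auto simp: cliques_def)

lemma finite_cliques: "finite V \<Longrightarrow> finite (cliques G V k)"
  using finite_ksubsets cliques_subset_ksubsets by (rule finite_subset[rotated])

lemma card_cliques_le: "finite V \<Longrightarrow> card (cliques G V k) \<le> card V choose k"
  by (metis card_ksubsets card_mono cliques_subset_ksubsets finite_ksubsets)

lemma cliques_subset_eq: "W \<subseteq> V \<Longrightarrow> cliques G W k = {K \<in> cliques G V k. K \<subseteq> W}"
  by (auto simp: cliques_def ksubsets_def)

lemma card_clique_le:
  assumes "cliques G V (Suc r) = {}" "S \<subseteq> V" "clique G S"
  shows "card S \<le> r"
proof (rule ccontr)
  assume "\<not> card S \<le> r"
  then obtain K where "K \<subseteq> S" "card K = Suc r"
    by (metis not_less_eq_eq obtain_subset_with_card_n)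
  then have "K \<in> cliques G V (Suc r)"
    using assms(2,3) by (auto simp: cliques_def ksubsets_def clique_def)
  then show False using assms(1) by simp
qed

definition clique_poly :: "('a \<Rightarrow> 'a \<Rightarrow> bool) \<Rightarrow> 'a set \<Rightarrow> nat \<Rightarrow> ('a \<Rightarrow> real) \<Rightarrow> real" where
  "clique_poly G V t x = (\<Sum>K\<in>cliques G V t. \<Prod>v\<in>K. x v)"

lemma clique_poly_le_esym:
  assumes fin: "finite V" and SV: "S \<subseteq> V" and nonneg: "\<And>v. x v \<ge> 0"
    and supp: "\<And>v. v \<notin> S \<Longrightarrow> x v = 0"
  shows "clique_poly G V t x \<le> esym S t x"
proof -
  have "clique_poly G V t x = (\<Sum>K\<in>{K \<in> cliques G V t. K \<subseteq> S}. \<Prod>v\<in>K. x v)"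
    unfolding clique_poly_def
  proof (rule sum.mono_neutral_right[OF finite_cliques[OF fin]])
    show "\<forall>K\<in>cliques G V t - {K \<in> cliques G V t. K \<subseteq> S}. (\<Prod>v\<in>K. x v) = 0"
    proof
      fix K assume K: "K \<in> cliques G V t - {K \<in> cliques G V t. K \<subseteq> S}"
      then have "finite K"
        using fin by (auto simp: cliques_def ksubsets_def intro: finite_subset)
      moreover obtain w where "w \<in> K" "w \<notin> S" using K by auto
      ultimately show "(\<Prod>v\<in>K. x v) = 0"
        using supp by (intro prod_zero) auto
    qed
  qed auto
  also have "\<dots> \<le> esym S t x"
    unfolding esym_def
    using finite_subset[OF SV fin]
    by (intro sum_mono2 finite_ksubsets) (auto simp: cliques_def ksubsets_def nonneg prod_nonneg)
  finally show ?thesis .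
qed

text \<open>No clique contains both ends of a non-edge, so the clique polynomial is affine along the segment
  between the two weight vectors that put all the weight of the non-edge on one end; the original
  weights lie on that segment.\<close>

lemma clique_poly_le_merge_nonadjacent:
  assumes fin: "finite V" and uv: "u \<noteq> v" "\<not> G u v" and nonneg: "x u \<ge> 0" "x v \<ge> 0"
  shows "clique_poly G V t x \<le>
    max (clique_poly G V t (x(u := x u + x v, v := 0))) (clique_poly G V t (x(v := x u + x v, u := 0)))"
    (is "_ \<le> max (clique_poly G V t ?x1) (clique_poly G V t ?x2)")
proof (cases "x u + x v = 0")
  case True
  then have "?x1 = x"
    using nonneg by (auto simp: fun_eq_iff)
  then show ?thesis by simp
next
  case False
  define s where "s = x u + x v"
  have spos: "s > 0" using False nonneg by (simp add: s_def)
  define \<alpha> where "\<alpha> = x u / s"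
  define \<beta> where "\<beta> = x v / s"
  have ab: "\<alpha> \<ge> 0" "\<beta> \<ge> 0" "\<alpha> + \<beta> = 1"
    using nonneg spos by (auto simp: \<alpha>_def \<beta>_def s_def add_divide_distrib[symmetric])
  have per_clique: "(\<Prod>w\<in>K. x w) = \<alpha> * (\<Prod>w\<in>K. ?x1 w) + \<beta> * (\<Prod>w\<in>K. ?x2 w)"
    if K: "K \<in> cliques G V t" for K
  proof -
    have fK: "finite K" using K fin by (auto simp: cliques_def ksubsets_def intro: finite_subset)
    have not_both: "\<not> (u \<in> K \<and> v \<in> K)"
      using K uv by (auto simp: cliques_def clique_def)
    have rest: "(\<Prod>w\<in>K - {u, v}. ?x1 w) = (\<Prod>w\<in>K - {u, v}. x w)"
      "(\<Prod>w\<in>K - {u, v}. ?x2 w) = (\<Prod>w\<in>K - {u, v}. x w)"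
      by (auto intro: prod.cong)
    have "\<alpha> * s = x u" "\<beta> * s = x v"
      using spos by (simp_all add: \<alpha>_def \<beta>_def)
    moreover have "\<alpha> * P + \<beta> * P = P" for P
      by (simp only: distrib_right[symmetric] ab(3) mult_1)
    ultimately show ?thesis
      unfolding prod_split_pair[OF fK uv(1), of x] prod_split_pair[OF fK uv(1), of ?x1]
        prod_split_pair[OF fK uv(1), of ?x2] rest
      using not_both uv(1) by (cases "u \<in> K"; cases "v \<in> K") (simp_all add: s_def mult.assoc[symmetric])
  qed
  have "clique_poly G V t x = \<alpha> * clique_poly G V t ?x1 + \<beta> * clique_poly G V t ?x2"
    unfolding clique_poly_def by (simp add: per_clique sum.distrib sum_distrib_left)
  also have "\<dots> \<le> \<alpha> * max (clique_poly G V t ?x1) (clique_poly G V t ?x2)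
      + \<beta> * max (clique_poly G V t ?x1) (clique_poly G V t ?x2)"
    using ab by (intro add_mono mult_left_mono) auto
  also have "\<dots> = max (clique_poly G V t ?x1) (clique_poly G V t ?x2)"
    using ab(3) by (simp add: distrib_right[symmetric])
  finally show ?thesis .
qed

lemma binomial_mult_fact: "real (n choose k) * fact k = (\<Prod>i = 0..<k. real n - real i)"
  by (metis binomial_gbinomial gbinomial_mult_fact' of_nat_id)

lemma binomial_div_power_mono:
  assumes "1 \<le> s" "s \<le> r"
  shows "real (s choose t) / real s ^ t \<le> real (r choose t) / real r ^ t"
proof (cases "t \<le> s")
  case False
  then show ?thesis by (simp add: binomial_eq_0)
next
  case True
  have eq: "real (n choose t) / real n ^ t = (\<Prod>i = 0..<t. 1 - real i / real n) / fact t" if "n \<ge> 1" for n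
  proof -
    have "(\<Prod>i = 0..<t. 1 - real i / real n) = (\<Prod>i = 0..<t. (real n - real i) / real n)"
      using that by (intro prod.cong) (simp_all add: field_simps)
    also have "\<dots> = (\<Prod>i = 0..<t. real n - real i) / real n ^ t"
      by (simp add: prod_dividef)
    moreover have "real (n choose t) = (\<Prod>i = 0..<t. real n - real i) / fact t"
      using binomial_mult_fact[of n t] by (simp add: field_simps)
    ultimately show ?thesis by simp
  qed
  have "(\<Prod>i = 0..<t. 1 - real i / real s) \<le> (\<Prod>i = 0..<t. 1 - real i / real r)"
    using True assms by (intro prod_mono) (auto simp: field_simps mult_left_mono)
  then show ?thesis
    using eq[of s] eq[of r] assms by (simp add: divide_right_mono)
qed

text \<open>The Motzkin--Straus argument: merging the weights of non-adjacent vertices reduces the support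
  to a clique, where Maclaurin's inequality applies.\<close>

lemma clique_poly_le_if_Kfree:
  assumes fin: "finite V" and no_clique: "cliques G V (Suc r) = {}" and r: "r \<ge> 1"
    and "S \<subseteq> V" "\<And>v. x v \<ge> 0" "\<And>v. v \<notin> S \<Longrightarrow> x v = 0" "(\<Sum>v\<in>S. x v) = 1"
  shows "clique_poly G V t x \<le> real (r choose t) / real r ^ t"
  using assms(4-)
proof (induction "card S" arbitrary: S x rule: less_induct)
  case less
  have fS: "finite S" using fin less.prems(1) finite_subset by blast
  show ?case
  proof (cases "clique G S")
    case True
    have ne: "S \<noteq> {}" using less.prems(4) by auto
    then have "card S \<ge> 1" using fS by (simp add: Suc_leI card_gt_0_iff)
    have "clique_poly G V t x \<le> esym S t x"
      using fin less.prems by (intro clique_poly_le_esym) auto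
    also have "\<dots> \<le> real (card S choose t) / real (card S) ^ t"
      using fS ne less.prems by (intro maclaurin_esym) auto
    also have "\<dots> \<le> real (r choose t) / real r ^ t"
      using card_clique_le[OF no_clique less.prems(1) True] \<open>card S \<ge> 1\<close> by (rule binomial_div_power_mono[rotated])
    finally show ?thesis .
  next
    case False
    then obtain u v where uv: "u \<in> S" "v \<in> S" "u \<noteq> v" "\<not> G u v"
      unfolding clique_def by blast
    have merged: "clique_poly G V t (x(a := x a + x b, b := 0)) \<le> real (r choose t) / real r ^ t"
      if "a \<in> S" "b \<in> S" "a \<noteq> b" for a b
    proof (rule less.hyps[of "S - {b}"])
      show "card (S - {b}) < card S" by (rule card_Diff1_less[OF fS that(2)])
      have "(\<Sum>w\<in>S - {b}. (x(a := x a + x b, b := 0)) w) = (\<Sum>w\<in>S. (x(a := x a + x b, b := 0)) w)"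
        using fS by (intro sum.mono_neutral_left) auto
      then show "(\<Sum>w\<in>S - {b}. (x(a := x a + x b, b := 0)) w) = 1"
        using sum_fun_upd_pair[OF fS that, of x "x a + x b" 0] less.prems(4) by simp
    qed (use less.prems that in auto)
    have "clique_poly G V t x \<le> max (clique_poly G V t (x(u := x u + x v, v := 0)))
        (clique_poly G V t (x(v := x v + x u, u := 0)))"
      using clique_poly_le_merge_nonadjacent[where G = G and u = u and v = v, OF fin uv(3,4)] less.prems(2) by (simp add: add.commute)
    then show ?thesis
      using merged[OF uv(1,2,3)] merged[OF uv(2,1) uv(3)[symmetric]] by linarith
  qed
qed

lemma card_cliques_le_if_Kfree:
  assumes fin: "finite V" and no_clique: "cliques G V (Suc r) = {}" and r: "r \<ge> 1"
  shows "real (card (cliques G V t)) \<le> real (r choose t) / real r ^ t * real (card V) ^ t"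
proof (cases "V = {}")
  case True
  then have "cliques G V t = (if t = 0 then {{}} else {})"
    by (auto simp: cliques_def ksubsets_def clique_def)
  then show ?thesis by simp
next
  case False
  define n where "n = real (card V)"
  have n: "n > 0" using False fin by (simp add: n_def card_gt_0_iff)
  define x where "x = (\<lambda>v. if v \<in> V then 1 / n else 0)"
  have "clique_poly G V t x = (\<Sum>K\<in>cliques G V t. (1 / n) ^ t)"
    unfolding clique_poly_def
    by (rule sum.cong) (auto simp: x_def cliques_def ksubsets_def subset_iff)
  moreover have "clique_poly G V t x \<le> real (r choose t) / real r ^ t"
    using n by (intro clique_poly_le_if_Kfree[OF fin no_clique r subset_refl]) (auto simp: x_def n_def)
  ultimately show ?thesis
    using n by (simp add: n_def field_simps power_one_over)
qed

section \<open>Complete partite subhypergraphs of dense hypergraphs\<close>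

definition nbhd :: "'a set \<Rightarrow> 'a set set \<Rightarrow> 'a set \<Rightarrow> 'a set" where
  "nbhd V H S = {w \<in> V. w \<notin> S \<and> insert w S \<in> H}"

definition common_link :: "'a set \<Rightarrow> 'a set set \<Rightarrow> nat \<Rightarrow> 'a set \<Rightarrow> 'a set set" where
  "common_link V H c W = {S \<in> ksubsets V c. W \<subseteq> nbhd V H S}"

definition disjoint_blocks :: "'a set \<Rightarrow> nat \<Rightarrow> nat \<Rightarrow> (nat \<Rightarrow> 'a set) \<Rightarrow> bool" where
  "disjoint_blocks V c m P \<longleftrightarrow>
     (\<forall>i<c. P i \<subseteq> V \<and> card (P i) = m) \<and> (\<forall>i<c. \<forall>j<c. i \<noteq> j \<longrightarrow> P i \<inter> P j = {})"

definition transversals_in :: "'a set set \<Rightarrow> nat \<Rightarrow> (nat \<Rightarrow> 'a set) \<Rightarrow> bool" where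
  "transversals_in H c P \<longleftrightarrow> (\<forall>f. (\<forall>i<c. f i \<in> P i) \<longrightarrow> f ` {..<c} \<in> H)"

lemma sum_card_nbhd:
  assumes fin: "finite V" and H: "H \<subseteq> ksubsets V (Suc c)"
  shows "(\<Sum>S\<in>ksubsets V c. card (nbhd V H S)) = Suc c * card H"
proof -
  have fH: "finite H" using H finite_ksubsets[OF fin] finite_subset by blast
  have "(\<Sum>S\<in>ksubsets V c. card (nbhd V H S)) = (\<Sum>w\<in>V. card {S \<in> ksubsets V c. w \<notin> S \<and> insert w S \<in> H})"
    unfolding nbhd_def by (rule sum_card_filter_swap[OF finite_ksubsets[OF fin] fin])
  also have "\<dots> = (\<Sum>w\<in>V. card {K \<in> H. w \<in> K})"
  proof (rule sum.cong[OF refl])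
    fix w assume w: "w \<in> V"
    have "bij_betw (\<lambda>K. K - {w}) {K \<in> H. w \<in> K} {S \<in> ksubsets V c. w \<notin> S \<and> insert w S \<in> H}"
    proof (rule bij_betw_byWitness[where f' = "insert w"])
      show "(\<lambda>K. K - {w}) ` {K \<in> H. w \<in> K} \<subseteq> {S \<in> ksubsets V c. w \<notin> S \<and> insert w S \<in> H}"
        using H fin by (auto simp: ksubsets_def insert_absorb intro: finite_subset)
    qed auto
    then show "card {S \<in> ksubsets V c. w \<notin> S \<and> insert w S \<in> H} = card {K \<in> H. w \<in> K}"
      by (simp add: bij_betw_same_card)
  qed
  also have "\<dots> = (\<Sum>K\<in>H. card {w \<in> V. w \<in> K})"
    by (rule sum_card_filter_swap[OF fin fH])
  also have "\<dots> = (\<Sum>K\<in>H. Suc c)"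
  proof (rule sum.cong[OF refl])
    fix K assume "K \<in> H"
    then have "K \<subseteq> V" "card K = Suc c" using H by (auto simp: ksubsets_def)
    moreover have "{w \<in> V. w \<in> K} = K" using \<open>K \<subseteq> V\<close> by auto
    ultimately show "card {w \<in> V. w \<in> K} = Suc c" by simp
  qed
  finally show ?thesis by simp
qed

lemma sum_card_common_link:
  assumes fin: "finite V"
  shows "(\<Sum>W\<in>ksubsets V m. card (common_link V H c W)) = (\<Sum>S\<in>ksubsets V c. card (nbhd V H S) choose m)"
proof -
  have "(\<Sum>W\<in>ksubsets V m. card (common_link V H c W)) =
      (\<Sum>S\<in>ksubsets V c. card {W \<in> ksubsets V m. W \<subseteq> nbhd V H S})"
    unfolding common_link_def by (rule sum_card_filter_swap[OF finite_ksubsets[OF fin] finite_ksubsets[OF fin]])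
  also have "\<dots> = (\<Sum>S\<in>ksubsets V c. card (nbhd V H S) choose m)"
  proof (rule sum.cong[OF refl])
    fix S
    have "{W \<in> ksubsets V m. W \<subseteq> nbhd V H S} = ksubsets (nbhd V H S) m"
      by (auto simp: ksubsets_def nbhd_def)
    moreover have "finite (nbhd V H S)" using fin by (simp add: nbhd_def)
    ultimately show "card {W \<in> ksubsets V m. W \<subseteq> nbhd V H S} = card (nbhd V H S) choose m"
      by (simp add: card_ksubsets)
  qed
  finally show ?thesis .
qed

lemma card_rich_ksubsets:
  assumes fin: "finite V" and H: "H \<subseteq> ksubsets V (Suc c)"
    and dens: "\<delta> * real (card V choose Suc c) \<le> real (card H)"
    and \<delta>: "\<delta> > 0" and n: "2 * c \<le> card V" "card V > 0"
  shows "\<delta> / 4 * real (card V choose c)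
    \<le> real (card {S \<in> ksubsets V c. \<delta> * (real (card V) - real c) / 2 \<le> real (card (nbhd V H S))})"
proof -
  define n where "n = card V"
  define N where "N = ksubsets V c"
  define d where "d = \<delta> * (real n - real c) / 2"
  define R where "R = {S \<in> N. d \<le> real (card (nbhd V H S))}"
  have fN: "finite N" using finite_ksubsets[OF fin] by (simp add: N_def)
  have RN: "R \<subseteq> N" by (auto simp: R_def)
  have cN: "card N = n choose c" by (simp add: N_def n_def card_ksubsets[OF fin])
  have d0: "d \<ge> 0" using n \<delta> by (simp add: d_def n_def)
  have nbhd_le: "card (nbhd V H S) \<le> n" for S
    unfolding n_def nbhd_def by (rule card_mono[OF fin]) auto
  have "Suc c * (n choose Suc c) = (n - c) * (n choose c)"
    by (metis binomial_absorption binomial_absorb_comp)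
  then have "\<delta> * ((real n - real c) * real (n choose c)) = \<delta> * real (Suc c * (n choose Suc c))"
    using n by (simp add: n_def of_nat_diff)
  also have "\<dots> = real (Suc c) * (\<delta> * real (n choose Suc c))"
    by (simp only: of_nat_mult mult.left_commute)
  also have "\<dots> \<le> real (Suc c) * real (card H)"
    using dens by (intro mult_left_mono) (simp_all add: n_def)
  also have "\<dots> = real (Suc c * card H)"
    by (simp only: of_nat_mult)
  also have "\<dots> = (\<Sum>S\<in>R. real (card (nbhd V H S))) + (\<Sum>S\<in>N - R. real (card (nbhd V H S)))"
    using sum_card_nbhd[OF fin H] sum.subset_diff[OF RN fN, of "\<lambda>S. real (card (nbhd V H S))"]
    by (simp add: N_def add.commute flip: of_nat_sum)
  also have "\<dots> \<le> (\<Sum>S\<in>R. real n) + (\<Sum>S\<in>N - R. d)"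
    by (intro add_mono sum_mono) (auto simp: nbhd_le R_def)
  also have "\<dots> \<le> real (card R) * real n + real (card N) * d"
    using fN d0 by (simp add: card_mono mult_right_mono)
  finally have "\<delta> * ((real n - real c) * real (n choose c)) \<le> real (card R) * real n + real (card N) * d" .
  moreover have "real (card N) * d = \<delta> * ((real n - real c) * real (n choose c)) / 2"
    by (simp add: cN d_def)
  ultimately have "\<delta> * ((real n - real c) * real (n choose c)) / 2 \<le> real (card R) * real n"
    by linarith
  moreover have "\<delta> / 4 * real (n choose c) * real n \<le> \<delta> * ((real n - real c) * real (n choose c)) / 2"
    using n \<delta> by (simp add: n_def field_simps mult_left_mono mult_right_mono)
  ultimately have "\<delta> / 4 * real (n choose c) * real n \<le> real (card R) * real n"
    by linarith
  then show ?thesis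
    using n by (simp add: R_def N_def n_def d_def)
qed

lemma binomial_mult_fact_ge:
  assumes "m \<le> D"
  shows "(real D - real m) ^ m \<le> real (D choose m) * fact m"
proof -
  have "(real D - real m) ^ m = (\<Prod>i = 0..<m. real D - real m)" by simp
  also have "\<dots> \<le> (\<Prod>i = 0..<m. real D - real i)"
    by (rule prod_mono) (use assms in auto)
  finally show ?thesis by (simp add: binomial_mult_fact)
qed

lemma binomial_mult_fact_le: "real (n choose m) * fact m \<le> real n ^ m"
  by (metis binomial_fact_pow of_nat_fact of_nat_le_iff of_nat_mult of_nat_power)

text \<open>Averaging over all \<open>m\<close>-sets \<open>W\<close>: each \<open>c\<close>-set whose neighbourhood has at least \<open>D\<close>
  elements lies in the common link of at least \<open>D choose m\<close> of them.\<close>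

lemma ex_large_common_link:
  assumes fin: "finite V" and m: "m \<le> card V" and R: "R \<subseteq> ksubsets V c"
    and D: "\<And>S. S \<in> R \<Longrightarrow> D \<le> card (nbhd V H S)"
  shows "\<exists>W\<in>ksubsets V m.
    real (card R) * real (D choose m) \<le> real (card (common_link V H c W)) * real (card V choose m)"
proof -
  have "real (card R) * real (D choose m) \<le> (\<Sum>S\<in>R. real (card (nbhd V H S) choose m))"
    using D by (simp add: sum_mono binomial_right_mono flip: sum_constant)
  also have "\<dots> \<le> (\<Sum>S\<in>ksubsets V c. real (card (nbhd V H S) choose m))"
    using R by (intro sum_mono2[OF finite_ksubsets[OF fin]]) auto
  also have "\<dots> = (\<Sum>W\<in>ksubsets V m. real (card (common_link V H c W)))"
    using sum_card_common_link[OF fin, where m = m and H = H and c = c] by (simp flip: of_nat_sum)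
  finally have avg: "real (card R) * real (D choose m) \<le> (\<Sum>W\<in>ksubsets V m. real (card (common_link V H c W)))" .
  have "card (ksubsets V m) > 0" using card_ksubsets[OF fin] m by simp
  then have "ksubsets V m \<noteq> {}" by auto
  from ex_ge_average[OF finite_ksubsets[OF fin] this avg] show ?thesis
    by (simp add: card_ksubsets[OF fin])
qed

lemma ex_dense_common_link:
  assumes fin: "finite V" and H: "H \<subseteq> ksubsets V (Suc c)"
    and dens: "\<delta> * real (card V choose Suc c) \<le> real (card H)" and \<delta>: "\<delta> > 0"
    and n: "2 * real c + 3 * real m / \<delta> \<le> real (card V)" "m \<le> card V" "card V > 0"
  shows "\<exists>W\<in>ksubsets V m. \<delta> / 4 * (\<delta> / 8) ^ m * real (card V choose c) \<le> real (card (common_link V H c W))"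
proof -
  define n where "n = card V"
  define R where "R = {S \<in> ksubsets V c. \<delta> * (real n - real c) / 2 \<le> real (card (nbhd V H S))}"
  define D where "D = nat \<lceil>\<delta> * (real n - real c) / 2\<rceil>"
  have "3 * real m / \<delta> \<ge> 0" using \<delta> by simp
  then have "real (2 * c) \<le> real n" using n(1) by (simp add: n_def)
  then have "2 * c \<le> n" by (simp only: of_nat_le_iff)
  then have R: "\<delta> / 4 * real (n choose c) \<le> real (card R)"
    using card_rich_ksubsets[OF fin H dens \<delta>] n by (simp add: R_def n_def)
  have D: "\<delta> * (real n - real c) / 2 \<le> real D" unfolding D_def by linarith
  have "D \<le> card (nbhd V H S)" if "S \<in> R" for S
    using that by (simp add: R_def D_def nat_le_iff ceiling_le_iff)
  then obtain W where W: "W \<in> ksubsets V m"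
    and link: "real (card R) * real (D choose m) \<le> real (card (common_link V H c W)) * real (n choose m)"
    using ex_large_common_link[OF fin n(2), of R c D H] by (auto simp: R_def n_def)
  have "\<delta> * real n \<ge> 2 * \<delta> * real c + 3 * real m"
    using n(1) \<delta> by (simp add: n_def field_simps)
  moreover have "\<delta> * real c \<ge> 0" "\<delta> * (real n - real c) = \<delta> * real n - \<delta> * real c"
    using \<delta> by (simp_all add: algebra_simps)
  ultimately have Dm: "\<delta> * real n / 8 \<le> real D - real m"
    using D by linarith
  have pos: "\<delta> * real n / 8 > 0" using \<delta> n by (simp add: n_def)
  have "\<delta> / 4 * (\<delta> / 8) ^ m * real (n choose c) * real n ^ m
      = \<delta> / 4 * real (n choose c) * (\<delta> * real n / 8) ^ m"
    by (simp add: power_divide power_mult_distrib)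
  also have "\<dots> \<le> real (card R) * (real D - real m) ^ m"
    using Dm pos by (intro mult_mono[OF R] power_mono) auto
  also have "\<dots> \<le> real (card R) * (real (D choose m) * fact m)"
  proof (rule mult_left_mono[OF binomial_mult_fact_ge])
    show "m \<le> D" using Dm pos by linarith
  qed simp
  also have "\<dots> \<le> real (card (common_link V H c W)) * (real (n choose m) * fact m)"
    using link by (simp add: mult.assoc[symmetric])
  also have "\<dots> \<le> real (card (common_link V H c W)) * real n ^ m"
    by (rule mult_left_mono[OF binomial_mult_fact_le]) simp
  finally have "\<delta> / 4 * (\<delta> / 8) ^ m * real (n choose c) \<le> real (card (common_link V H c W))"
    by (rule mult_right_le_imp_le) (use n(3) in \<open>simp add: n_def\<close>)
  then show ?thesis
    using W by (auto simp: n_def)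
qed

lemma disjoint_blocks_add_block:
  assumes "disjoint_blocks (V - W) c m P" "W \<subseteq> V" "card W = m"
  shows "disjoint_blocks V (Suc c) m (P(c := W))"
  using assms by (auto simp: disjoint_blocks_def less_Suc_eq)

lemma transversals_in_add_block:
  assumes "transversals_in (common_link V H c W) c P"
  shows "transversals_in H (Suc c) (P(c := W))"
  unfolding transversals_in_def
proof (intro allI impI)
  fix f assume f: "\<forall>i<Suc c. f i \<in> (P(c := W)) i"
  have "\<forall>i<c. f i \<in> P i"
  proof (intro allI impI)
    fix i assume "i < c"
    then show "f i \<in> P i" using f[rule_format, of i] by simp
  qed
  then have "f ` {..<c} \<in> common_link V H c W"
    using assms by (simp add: transversals_in_def)
  moreover have "f c \<in> W" using f by auto
  ultimately have "insert (f c) (f ` {..<c}) \<in> H"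
    by (auto simp: common_link_def nbhd_def)
  then show "f ` {..<Suc c} \<in> H" by (simp add: lessThan_Suc)
qed

lemma common_link_dense_on_complement:
  assumes fin: "finite V" and W: "W \<in> ksubsets V m" and \<delta>: "\<delta> \<ge> 0"
    and link: "\<delta> * real (card V choose c) \<le> real (card (common_link V H c W))"
  shows "common_link V H c W \<subseteq> ksubsets (V - W) c" "card (V - W) = card V - m"
    "\<delta> * real (card (V - W) choose c) \<le> real (card (common_link V H c W))"
proof -
  show "common_link V H c W \<subseteq> ksubsets (V - W) c"
    by (auto simp: common_link_def ksubsets_def nbhd_def)
  have "W \<subseteq> V" "card W = m" using W by (auto simp: ksubsets_def)
  then show card_VW: "card (V - W) = card V - m"
    using card_Diff_subset[OF finite_subset[OF _ fin]] by simp
  have "\<delta> * real (card (V - W) choose c) \<le> \<delta> * real (card V choose c)"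
    using \<delta> by (intro mult_left_mono) (simp_all add: card_VW binomial_right_mono)
  then show "\<delta> * real (card (V - W) choose c) \<le> real (card (common_link V H c W))"
    using link by linarith
qed

text \<open>Erd\H{o}s's theorem on complete partite hypergraphs, by induction on \<open>c\<close> through the common link
  of a well-chosen block.\<close>

theorem complete_partite_in_dense_hypergraph:
  assumes "\<delta> > 0"
  shows "\<exists>n0. \<forall>(V :: 'a set) H. finite V \<and> n0 \<le> card V \<and> H \<subseteq> ksubsets V c
    \<and> \<delta> * real (card V choose c) \<le> real (card H) \<longrightarrow> (\<exists>P. disjoint_blocks V c m P \<and> transversals_in H c P)"
  using assms
proof (induction c arbitrary: \<delta>)
  case 0
  show ?case
  proof (intro exI[of _ 0] allI impI, elim conjE)
    fix V :: "'a set" and H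
    assume "finite V" "H \<subseteq> ksubsets V 0" "\<delta> * real (card V choose 0) \<le> real (card H)"
    then have "H \<subseteq> {{}}" "H \<noteq> {}"
      using 0 by (auto simp: ksubsets_def card_eq_0_iff finite_subset)
    then have "{} \<in> H" by blast
    then show "\<exists>P. disjoint_blocks V 0 m P \<and> transversals_in H 0 P"
      by (simp add: disjoint_blocks_def transversals_in_def)
  qed
next
  case (Suc c)
  define \<delta>' where "\<delta>' = \<delta> / 4 * (\<delta> / 8) ^ m"
  have "\<delta>' > 0" using Suc.prems by (simp add: \<delta>'_def)
  then obtain n1 where n1: "\<forall>(V :: 'a set) H. finite V \<and> n1 \<le> card V \<and> H \<subseteq> ksubsets V c
      \<and> \<delta>' * real (card V choose c) \<le> real (card H) \<longrightarrow> (\<exists>P. disjoint_blocks V c m P \<and> transversals_in H c P)"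
    using Suc.IH by blast
  show ?case
  proof (intro exI[of _ "n1 + m + 2 * c + nat \<lceil>3 * real m / \<delta>\<rceil> + 1"] allI impI, elim conjE)
    fix V :: "'a set" and H
    assume fin: "finite V" and n: "n1 + m + 2 * c + nat \<lceil>3 * real m / \<delta>\<rceil> + 1 \<le> card V"
      and H: "H \<subseteq> ksubsets V (Suc c)" and dens: "\<delta> * real (card V choose Suc c) \<le> real (card H)"
    have "real (n1 + m + 2 * c + nat \<lceil>3 * real m / \<delta>\<rceil> + 1) \<le> real (card V)"
      using n by (simp only: of_nat_le_iff)
    moreover have "3 * real m / \<delta> \<le> real (nat \<lceil>3 * real m / \<delta>\<rceil>)"
      by linarith
    ultimately have "2 * real c + 3 * real m / \<delta> \<le> real (card V)"
      by simp
    moreover have "m \<le> card V" "card V > 0" using n by simp_all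
    ultimately obtain W where W: "W \<in> ksubsets V m"
      and link: "\<delta>' * real (card V choose c) \<le> real (card (common_link V H c W))"
      using ex_dense_common_link[OF fin H dens Suc.prems] unfolding \<delta>'_def by blast
    note common_link_dense_on_complement[OF fin W less_imp_le[OF \<open>\<delta>' > 0\<close>] link]
    moreover have "n1 \<le> card V - m" using n by linarith
    ultimately obtain P where "disjoint_blocks (V - W) c m P" "transversals_in (common_link V H c W) c P"
      using n1[rule_format, of "V - W" "common_link V H c W"] fin n by auto
    moreover have "W \<subseteq> V" "card W = m" using W by (auto simp: ksubsets_def)
    ultimately show "\<exists>P. disjoint_blocks V (Suc c) m P \<and> transversals_in H (Suc c) P"
      using disjoint_blocks_add_block transversals_in_add_block by blast
  qed
qed

section \<open>Supersaturation and the Erd\H{o}s--Stone theorem for cliques\<close>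

definition turan_density :: "nat \<Rightarrow> nat \<Rightarrow> real" where
  "turan_density r t = real (r choose t) * fact t / real r ^ t"

lemma turan_density_nonneg: "turan_density r t \<ge> 0"
  by (simp add: turan_density_def)

lemma ex_sample_size:
  assumes "e > 0"
  shows "\<exists>m. t \<le> m \<and> k \<le> m \<and> real (r choose t) / real r ^ t * real m ^ t \<le> (turan_density r t + e) * real (m choose t)"
proof -
  define a where "a = turan_density r t / (turan_density r t + e)"
  have pos: "turan_density r t + e > 0" using assms turan_density_nonneg[of r t] by linarith
  have "a < 1" using pos assms by (simp add: a_def)
  moreover have "(\<lambda>m. (1 - real t / real m) ^ t) \<longlonglongrightarrow> (1 - 0) ^ t"
    by (intro tendsto_intros lim_const_over_n)
  ultimately have "eventually (\<lambda>m. a < (1 - real t / real m) ^ t) sequentially"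
    by (intro order_tendstoD(1)) auto
  then obtain M where M: "\<And>m. M \<le> m \<Longrightarrow> a < (1 - real t / real m) ^ t"
    by (auto simp: eventually_sequentially)
  define m where "m = M + t + k + 1"
  have mpos: "real m > 0" by (simp add: m_def)
  have "turan_density r t * real m ^ t = a * (turan_density r t + e) * real m ^ t"
    using pos by (simp add: a_def)
  also have "\<dots> \<le> (1 - real t / real m) ^ t * real m ^ t * (turan_density r t + e)"
    using M[of m] pos by (simp add: m_def mult.commute mult.left_commute mult_left_mono)
  also have "(1 - real t / real m) ^ t * real m ^ t = (real m - real t) ^ t"
    using mpos by (simp add: power_mult_distrib[symmetric] field_simps)
  also have "\<dots> \<le> real (m choose t) * fact t"
    by (rule binomial_mult_fact_ge) (simp add: m_def)
  finally have "turan_density r t * real m ^ t \<le> (turan_density r t + e) * real (m choose t) * fact t"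
    using pos by (simp add: mult.commute mult.left_commute)
  then have "turan_density r t * real m ^ t / fact t \<le> (turan_density r t + e) * real (m choose t)"
    by (simp add: divide_le_eq)
  moreover have "real (r choose t) / real r ^ t * real m ^ t = turan_density r t * real m ^ t / fact t"
    by (simp add: turan_density_def)
  ultimately have "real (r choose t) / real r ^ t * real m ^ t \<le> (turan_density r t + e) * real (m choose t)"
    by simp
  then show ?thesis
    by (intro exI[of _ m]) (simp add: m_def)
qed

lemma sum_card_cliques_ksubsets:
  assumes fin: "finite V" and tm: "t \<le> m"
  shows "(\<Sum>W\<in>ksubsets V m. card (cliques G W t)) = card (cliques G V t) * ((card V - t) choose (m - t))"
proof -
  have "(\<Sum>W\<in>ksubsets V m. card (cliques G W t)) = (\<Sum>W\<in>ksubsets V m. card {K \<in> cliques G V t. K \<subseteq> W})"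
    by (rule sum.cong[OF refl]) (auto simp: ksubsets_def cliques_subset_eq)
  also have "\<dots> = (\<Sum>K\<in>cliques G V t. card {W \<in> ksubsets V m. K \<subseteq> W})"
    by (rule sum_card_filter_swap[OF finite_ksubsets[OF fin] finite_cliques[OF fin]])
  also have "\<dots> = (\<Sum>K\<in>cliques G V t. (card V - t) choose (m - t))"
  proof (rule sum.cong[OF refl])
    fix K assume "K \<in> cliques G V t"
    then have "K \<subseteq> V" "card K = t" by (auto simp: cliques_def ksubsets_def)
    then show "card {W \<in> ksubsets V m. K \<subseteq> W} = (card V - t) choose (m - t)"
      using card_ksubsets_supset[OF fin, of K m] tm by simp
  qed
  finally show ?thesis by simp
qed

text \<open>Double counting the \<open>t\<close>-cliques against the \<open>m\<close>-sets containing them.\<close>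

lemma card_ksubsets_with_clique_ge:
  assumes fin: "finite V" and tm: "t \<le> m" and mn: "m \<le> card V" and a: "a \<ge> 0"
    and sparse: "\<And>W. W \<in> ksubsets V m \<Longrightarrow> cliques G W s = {} \<Longrightarrow>
      real (card (cliques G W t)) \<le> a * real (m choose t)"
    and dens: "(a + \<epsilon>) * real (card V choose t) \<le> real (card (cliques G V t))"
  shows "\<epsilon> * real (card V choose m) \<le> real (card {W \<in> ksubsets V m. cliques G W s \<noteq> {}})"
proof -
  define n where "n = card V"
  define b where "b = real (m choose t)"
  define B where "B = {W \<in> ksubsets V m. cliques G W s \<noteq> {}}"
  have fW: "finite (ksubsets V m)" by (rule finite_ksubsets[OF fin])
  have BW: "B \<subseteq> ksubsets V m" by (auto simp: B_def)
  have b: "b > 0" using tm by (simp add: b_def)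
  have all: "real (card (cliques G W t)) \<le> b" if "W \<in> ksubsets V m" for W
  proof -
    have "finite W" "card W = m" using that fin by (auto simp: ksubsets_def intro: finite_subset)
    then show ?thesis using card_cliques_le[of W G t] by (simp add: b_def)
  qed
  have "real (card (cliques G V t)) * real ((n - t) choose (m - t)) = (\<Sum>W\<in>ksubsets V m. real (card (cliques G W t)))"
    using sum_card_cliques_ksubsets[OF fin tm, of G] by (simp add: n_def flip: of_nat_sum of_nat_mult)
  also have "\<dots> = (\<Sum>W\<in>ksubsets V m - B. real (card (cliques G W t))) + (\<Sum>W\<in>B. real (card (cliques G W t)))"
    using sum.subset_diff[OF BW fW] by simp
  also have "\<dots> \<le> (\<Sum>W\<in>ksubsets V m - B. a * b) + (\<Sum>W\<in>B. b)"
  proof (intro add_mono sum_mono)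
    show "real (card (cliques G W t)) \<le> a * b" if "W \<in> ksubsets V m - B" for W
      using that sparse by (simp add: B_def b_def)
    show "real (card (cliques G W t)) \<le> b" if "W \<in> B" for W
      using that BW all by blast
  qed
  also have "\<dots> \<le> real (n choose m) * (a * b) + real (card B) * b"
  proof -
    have "card (ksubsets V m - B) \<le> n choose m"
      using card_mono[OF fW, of "ksubsets V m - B"] card_ksubsets[OF fin] by (simp add: n_def)
    then show ?thesis using a b by (simp add: mult_right_mono)
  qed
  finally have upper: "real (card (cliques G V t)) * real ((n - t) choose (m - t))
      \<le> real (n choose m) * (a * b) + real (card B) * b" .
  have "real (n choose m) * b = real (n choose t) * real ((n - t) choose (m - t))"
    using choose_mult[OF tm, of n] mn by (simp add: b_def n_def flip: of_nat_mult)
  then have "(a + \<epsilon>) * (real (n choose m) * b) = (a + \<epsilon>) * real (n choose t) * real ((n - t) choose (m - t))"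
    by (simp add: mult.assoc)
  also have "\<dots> \<le> real (card (cliques G V t)) * real ((n - t) choose (m - t))"
    using dens by (intro mult_right_mono) (simp_all add: n_def)
  finally have "(a + \<epsilon>) * (real (n choose m) * b) \<le> real (card (cliques G V t)) * real ((n - t) choose (m - t))" .
  with upper have "(\<epsilon> * real (n choose m)) * b \<le> real (card B) * b"
    by (simp add: algebra_simps)
  then show ?thesis
    using b by (simp add: B_def n_def)
qed

lemma card_ksubsets_with_clique_le:
  assumes fin: "finite V" and sm: "s \<le> m" and mn: "m \<le> card V"
  shows "real (card {W \<in> ksubsets V m. cliques G W s \<noteq> {}}) * real (card V choose s)
    \<le> real (card (cliques G V s)) * real (m choose s) * real (card V choose m)"
proof -
  have "{W \<in> ksubsets V m. cliques G W s \<noteq> {}} \<subseteq> (\<Union>K\<in>cliques G V s. {W \<in> ksubsets V m. K \<subseteq> W})"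
    by (auto simp: ksubsets_def cliques_subset_eq)
  then have "card {W \<in> ksubsets V m. cliques G W s \<noteq> {}} \<le> card (\<Union>K\<in>cliques G V s. {W \<in> ksubsets V m. K \<subseteq> W})"
    by (intro card_mono) (simp_all add: finite_cliques finite_ksubsets fin)
  also have "\<dots> \<le> (\<Sum>K\<in>cliques G V s. card {W \<in> ksubsets V m. K \<subseteq> W})"
    by (rule card_UN_le[OF finite_cliques[OF fin]])
  also have "\<dots> = (\<Sum>K\<in>cliques G V s. (card V - s) choose (m - s))"
  proof (rule sum.cong[OF refl])
    fix K assume "K \<in> cliques G V s"
    then have "K \<subseteq> V" "card K = s" by (auto simp: cliques_def ksubsets_def)
    then show "card {W \<in> ksubsets V m. K \<subseteq> W} = (card V - s) choose (m - s)"
      using card_ksubsets_supset[OF fin, of K m] sm by simp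
  qed
  finally have "card {W \<in> ksubsets V m. cliques G W s \<noteq> {}} * (card V choose s)
      \<le> card (cliques G V s) * ((card V choose s) * ((card V - s) choose (m - s)))"
    by simp
  also have "\<dots> = card (cliques G V s) * (m choose s) * (card V choose m)"
    using choose_mult[OF sm mn] by (simp add: mult.commute)
  finally show ?thesis
    by (simp only: of_nat_le_iff flip: of_nat_mult)
qed

theorem supersaturation:
  assumes r: "r \<ge> 1" and \<epsilon>: "\<epsilon> > 0"
  shows "\<exists>\<delta>>0. \<exists>n1. \<forall>(V :: 'a set) G. finite V \<and> n1 \<le> card V
    \<and> (turan_density r t + \<epsilon>) * real (card V choose t) \<le> real (card (cliques G V t))
    \<longrightarrow> \<delta> * real (card V choose Suc r) \<le> real (card (cliques G V (Suc r)))"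
proof -
  obtain m where m: "t \<le> m" "Suc r \<le> m"
    "real (r choose t) / real r ^ t * real m ^ t \<le> (turan_density r t + \<epsilon> / 2) * real (m choose t)"
    using ex_sample_size[of "\<epsilon> / 2" t "Suc r" r] \<epsilon> by auto
  define \<delta> where "\<delta> = (\<epsilon> / 2) / real (m choose Suc r)"
  have mc: "real (m choose Suc r) > 0" using m(2) by simp
  then have "\<delta> > 0" using \<epsilon> by (simp add: \<delta>_def)
  show ?thesis
  proof (intro exI[of _ \<delta>] conjI \<open>\<delta> > 0\<close> exI[of _ m] allI impI, elim conjE)
    fix V :: "'a set" and G
    assume fin: "finite V" and nm: "m \<le> card V"
      and dens: "(turan_density r t + \<epsilon>) * real (card V choose t) \<le> real (card (cliques G V t))"
    define n where "n = card V"
    define B where "B = {W \<in> ksubsets V m. cliques G W (Suc r) \<noteq> {}}"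
    have sparse: "real (card (cliques G W t)) \<le> (turan_density r t + \<epsilon> / 2) * real (m choose t)"
      if "W \<in> ksubsets V m" "cliques G W (Suc r) = {}" for W
    proof -
      have "finite W" "card W = m" using that fin by (auto simp: ksubsets_def intro: finite_subset)
      then show ?thesis
        using card_cliques_le_if_Kfree[OF _ that(2) r, of t] m(3) by simp
    qed
    have nonneg: "turan_density r t + \<epsilon> / 2 \<ge> 0" using turan_density_nonneg[of r t] \<epsilon> by linarith
    have "(turan_density r t + \<epsilon> / 2 + \<epsilon> / 2) * real (card V choose t) \<le> real (card (cliques G V t))"
      using dens by (simp only: add.assoc field_sum_of_halves)
    from card_ksubsets_with_clique_ge[OF fin m(1) nm nonneg sparse this]
    have "\<epsilon> / 2 * real (n choose m) \<le> real (card B)"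
      by (simp add: B_def n_def)
    then have "\<epsilon> / 2 * real (n choose m) * real (n choose Suc r) \<le> real (card B) * real (n choose Suc r)"
      by (rule mult_right_mono) simp
    also have "\<dots> \<le> real (card (cliques G V (Suc r))) * real (m choose Suc r) * real (n choose m)"
      using card_ksubsets_with_clique_le[OF fin m(2) nm, of G] by (simp add: B_def n_def)
    finally have "(\<epsilon> / 2 * real (n choose Suc r)) * real (n choose m)
        \<le> (real (card (cliques G V (Suc r))) * real (m choose Suc r)) * real (n choose m)"
      by (simp only: ac_simps)
    then have "\<epsilon> / 2 * real (n choose Suc r) \<le> real (card (cliques G V (Suc r))) * real (m choose Suc r)"
      by (rule mult_right_le_imp_le) (use nm in \<open>simp add: n_def\<close>)
    then show "\<delta> * real (card V choose Suc r) \<le> real (card (cliques G V (Suc r)))"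
      using mc by (simp add: \<delta>_def n_def field_simps)
  qed
qed

definition complete_between_blocks :: "('a \<Rightarrow> 'a \<Rightarrow> bool) \<Rightarrow> nat \<Rightarrow> (nat \<Rightarrow> 'a set) \<Rightarrow> bool" where
  "complete_between_blocks G c P \<longleftrightarrow> (\<forall>i<c. \<forall>j<c. i \<noteq> j \<longrightarrow> (\<forall>a\<in>P i. \<forall>b\<in>P j. G a b))"

lemma complete_between_blocks_if_transversals_in_cliques:
  assumes fin: "finite V" and P: "disjoint_blocks V c m P" and cl: "transversals_in (cliques G V c) c P"
  shows "complete_between_blocks G c P"
  unfolding complete_between_blocks_def
proof (intro allI impI ballI)
  fix i j a b assume ij: "i < c" "j < c" "i \<noteq> j" and ab: "a \<in> P i" "b \<in> P j"
  have "P k \<noteq> {}" if "k < c" for k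
  proof -
    have "finite (P i)" "card (P k) = card (P i)"
      using P ij that fin by (auto simp: disjoint_blocks_def intro: finite_subset)
    then show ?thesis using ab(1) by auto
  qed
  define f where "f = (\<lambda>k. if k = i then a else if k = j then b else (SOME x. x \<in> P k))"
  have "\<forall>k<c. f k \<in> P k"
    using ab \<open>\<And>k. k < c \<Longrightarrow> P k \<noteq> {}\<close> by (auto simp: f_def some_in_eq)
  then have "clique G (f ` {..<c})"
    using cl by (auto simp: transversals_in_def cliques_def)
  moreover have "a \<noteq> b" using P ij ab unfolding disjoint_blocks_def by blast
  moreover have "a \<in> f ` {..<c}" "b \<in> f ` {..<c}"
    using ij by (auto simp: f_def image_iff intro!: bexI[of _ i] bexI[of _ j])
  ultimately show "G a b" by (auto simp: clique_def)
qed

text \<open>Combine supersaturation with Erd\H{o}s's theorem applied to the hypergraph of \<open>(r + 1)\<close>-cliques.\<close>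

theorem erdos_stone_cliques:
  assumes r: "r \<ge> 1" and \<epsilon>: "\<epsilon> > 0"
  shows "\<exists>n1. \<forall>(V :: 'a set) G. finite V \<and> n1 \<le> card V
    \<and> (turan_density r t + \<epsilon>) * real (card V choose t) \<le> real (card (cliques G V t))
    \<longrightarrow> (\<exists>P. disjoint_blocks V (Suc r) m P \<and> complete_between_blocks G (Suc r) P)"
proof -
  obtain \<delta> n1 where \<delta>: "\<delta> > 0" and n1: "\<forall>(V :: 'a set) G. finite V \<and> n1 \<le> card V
      \<and> (turan_density r t + \<epsilon>) * real (card V choose t) \<le> real (card (cliques G V t))
      \<longrightarrow> \<delta> * real (card V choose Suc r) \<le> real (card (cliques G V (Suc r)))"
    using supersaturation[OF r \<epsilon>] by blast
  obtain n0 where n0: "\<forall>(V :: 'a set) H. finite V \<and> n0 \<le> card V \<and> H \<subseteq> ksubsets V (Suc r)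
      \<and> \<delta> * real (card V choose Suc r) \<le> real (card H)
      \<longrightarrow> (\<exists>P. disjoint_blocks V (Suc r) m P \<and> transversals_in H (Suc r) P)"
    using complete_partite_in_dense_hypergraph[OF \<delta>] by blast
  show ?thesis
  proof (intro exI[of _ "max n0 n1"] allI impI, elim conjE)
    fix V :: "'a set" and G
    assume fin: "finite V" and n: "max n0 n1 \<le> card V"
      and dens: "(turan_density r t + \<epsilon>) * real (card V choose t) \<le> real (card (cliques G V t))"
    then have "\<delta> * real (card V choose Suc r) \<le> real (card (cliques G V (Suc r)))"
      using n1 by simp
    then obtain P where "disjoint_blocks V (Suc r) m P" "transversals_in (cliques G V (Suc r)) (Suc r) P"
      using n0[rule_format, of V "cliques G V (Suc r)"] fin n cliques_subset_ksubsets[of G V "Suc r"] by auto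
    then show "\<exists>P. disjoint_blocks V (Suc r) m P \<and> complete_between_blocks G (Suc r) P"
      using complete_between_blocks_if_transversals_in_cliques[OF fin] by blast
  qed
qed

section \<open>Cliques in Tur\'an graphs\<close>

lemma residue_lift_image:
  fixes g :: "nat \<Rightarrow> nat"
  assumes "R \<subseteq> {0..<l}"
  shows "(\<lambda>a. a mod l) ` ((\<lambda>i. g i * l + i) ` R) = R"
proof -
  have "(\<lambda>a. a mod l) ` ((\<lambda>i. g i * l + i) ` R) = (\<lambda>i. (g i * l + i) mod l) ` R"
    by (simp add: image_comp comp_def)
  also have "\<dots> = (\<lambda>i. i) ` R"
    using assms by (intro image_cong) auto
  finally show ?thesis by simp
qed

lemma inj_on_residue_lift:
  fixes g :: "nat \<Rightarrow> nat"
  assumes "R \<subseteq> {0..<l}"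
  shows "inj_on (\<lambda>i. g i * l + i) R"
proof (rule inj_onI)
  fix x y assume "x \<in> R" "y \<in> R" "g x * l + x = g y * l + y"
  then have "(g x * l + x) mod l = (g y * l + y) mod l" "x < l" "y < l"
    using assms by auto
  then show "x = y" by simp
qed

text \<open>A residue transversal is determined by its set \<open>R\<close> of residues and by the quotients
  \<open>g i\<close> of its elements.\<close>

lemma inj_on_residue_lift_pairs:
  fixes l :: nat and A :: "nat set"
  shows "inj_on (\<lambda>(R, g). (\<lambda>i. g i * l + i) ` R) (Sigma (ksubsets {0..<l} t) (\<lambda>R. PiE R (\<lambda>_. A)))"
proof (rule inj_onI, clarify)
  fix R g R' g'
  assume R: "R \<in> ksubsets {0..<l} t" "g \<in> PiE R (\<lambda>_. A)" and R': "R' \<in> ksubsets {0..<l} t" "g' \<in> PiE R' (\<lambda>_. A)"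
    and eq: "(\<lambda>i. g i * l + i) ` R = (\<lambda>i. g' i * l + i) ` R'"
  have RR: "R = R'"
    using eq residue_lift_image[of R l g] residue_lift_image[of R' l g'] R R' by (simp add: ksubsets_def)
  have "g i = g' i" for i
  proof (cases "i \<in> R")
    case True
    then obtain j where j: "j \<in> R'" "g i * l + i = g' j * l + j" using eq by blast
    have l: "i < l" "j < l" using True j(1) R(1) R'(1) by (auto simp: ksubsets_def)
    then have "i = (g i * l + i) mod l" "(g' j * l + j) mod l = j" by simp_all
    then have "i = j" by (simp only: j(2))
    then show ?thesis using j(2) l by simp
  next
    case False
    then show ?thesis using R(2) R'(2) RR by (auto simp: PiE_def extensional_def)
  qed
  then show "R = R' \<and> g = g'" using RR by auto
qed

lemma card_residue_transversals_ge:
  assumes l: "l \<ge> 1"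
  shows "real (l choose t) * real (n div l) ^ t
    \<le> real (card {K \<in> ksubsets {0..<n} t. inj_on (\<lambda>a. a mod l) K})"
proof -
  define q where "q = n div l"
  define D where "D = Sigma (ksubsets {0..<l} t) (\<lambda>R. PiE R (\<lambda>_. {0..<q}))"
  define lift where "lift = (\<lambda>(R, g). (\<lambda>i. g i * l + i) ` (R :: nat set))"
  define T where "T = {K \<in> ksubsets {0..<n} t. inj_on (\<lambda>a. a mod l) K}"
  have lift_into: "lift ` D \<subseteq> T"
  proof
    fix K assume "K \<in> lift ` D"
    then obtain R g where R: "R \<subseteq> {0..<l}" "card R = t" and g: "g \<in> PiE R (\<lambda>_. {0..<q})"
      and K: "K = (\<lambda>i. g i * l + i) ` R"
      by (auto simp: D_def lift_def ksubsets_def)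
    have "g i * l + i < n" if "i \<in> R" for i
    proof -
      have "g i < q" using g that by (auto dest: PiE_mem)
      then have "(g i + 1) * l \<le> q * l" by (intro mult_right_mono) auto
      also have "\<dots> \<le> n" by (simp add: q_def)
      finally show ?thesis using R that by auto
    qed
    moreover have cK: "card K = t" using K R inj_on_residue_lift[OF R(1)] by (simp add: card_image)
    moreover have "inj_on (\<lambda>a. a mod l) K"
    proof -
      have "finite K" using K R(1) finite_subset by blast
      moreover have "card ((\<lambda>a. a mod l) ` K) = card K"
        using residue_lift_image[OF R(1), of g] K R(2) cK by simp
      ultimately show ?thesis by (rule eq_card_imp_inj_on)
    qed
    ultimately show "K \<in> T" using K by (auto simp: T_def ksubsets_def)
  qed
  have "finite T" by (simp add: T_def finite_ksubsets)
  with inj_on_residue_lift_pairs lift_into have "card D \<le> card T"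
    unfolding D_def lift_def by (rule card_inj_on_le)
  moreover have "card D = (l choose t) * q ^ t"
  proof -
    have "card D = (\<Sum>R\<in>ksubsets {0..<l} t. card (PiE R (\<lambda>_. {0..<q})))"
      unfolding D_def
      by (rule card_SigmaI) (auto simp: finite_ksubsets ksubsets_def intro!: finite_PiE intro: finite_subset)
    also have "\<dots> = (\<Sum>R\<in>ksubsets {0..<l} t. q ^ t)"
      by (rule sum.cong) (auto simp: ksubsets_def card_PiE finite_subset)
    finally show ?thesis by (simp add: card_ksubsets)
  qed
  ultimately show ?thesis
    by (simp add: q_def T_def flip: of_nat_power of_nat_mult)
qed

lemma eventually_turan_density_le:
  assumes l: "l \<ge> 1" and \<epsilon>: "\<epsilon> > 0"
  shows "eventually (\<lambda>n. turan_density l t - \<epsilon> \<le> real (l choose t) * real (n div l) ^ t / real (n choose t)) sequentially"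
proof -
  have "(\<lambda>n. turan_density l t * (1 - real l / real n) ^ t) \<longlonglongrightarrow> turan_density l t * (1 - 0) ^ t"
    by (intro tendsto_intros lim_const_over_n)
  moreover have "turan_density l t - \<epsilon> < turan_density l t * (1 - 0) ^ t" using \<epsilon> by simp
  ultimately have "eventually (\<lambda>n. turan_density l t - \<epsilon> < turan_density l t * (1 - real l / real n) ^ t) sequentially"
    by (rule order_tendstoD(1))
  moreover have "eventually (\<lambda>n. l + t < n) sequentially"
    by (rule eventually_gt_at_top)
  ultimately show ?thesis
  proof eventually_elim
    case (elim n)
    have n: "real n > 0" "real (n choose t) > 0" using elim(2) by simp_all
    have "real n < (real (n div l) + 1) * real l"
    proof -
      have "n < (n div l + 1) * l" using l by (simp add: dividend_less_div_times)
      then have "real n < real ((n div l + 1) * l)" by (simp only: of_nat_less_iff)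
      then show ?thesis by (simp add: algebra_simps)
    qed
    then have q: "(real n - real l) / real l \<le> real (n div l)"
      using l by (simp add: field_simps)
    have q0: "0 \<le> (real n - real l) / real l" using elim(2) by simp
    have "turan_density l t * (1 - real l / real n) ^ t
        = real (l choose t) * ((real n - real l) / real l) ^ t * (fact t / real n ^ t)"
      using n l by (simp add: turan_density_def power_divide field_simps)
    also have "\<dots> \<le> real (l choose t) * real (n div l) ^ t * (1 / real (n choose t))"
    proof (intro mult_mono mult_left_mono power_mono q q0)
      show "fact t / real n ^ t \<le> 1 / real (n choose t)"
        using binomial_mult_fact_le[of n t] n by (simp add: field_simps)
    qed (simp_all add: q0)
    finally show ?case using elim(1) by simp
  qed
qed

lemma card_residue_transversals_le_cliques:
  fixes f :: "nat \<Rightarrow> nat"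
  assumes inj: "inj_on f {0..<n}" and im: "f ` {0..<n} \<subseteq> {0..<n}"
    and E: "\<And>a b. a < n \<Longrightarrow> b < n \<Longrightarrow> a mod l \<noteq> b mod l \<Longrightarrow> G (f a) (f b)"
  shows "card {K \<in> ksubsets {0..<n} t. inj_on (\<lambda>a. a mod l) K} \<le> card (cliques G {0..<n} t)"
proof (rule card_inj_on_le)
  let ?T = "{K \<in> ksubsets {0..<n} t. inj_on (\<lambda>a. a mod l) K}"
  show "inj_on (image f) ?T"
    using inj_on_image_Pow[OF inj] by (rule inj_on_subset) (auto simp: ksubsets_def)
  show "image f ` ?T \<subseteq> cliques G {0..<n} t"
  proof
    fix K' assume "K' \<in> image f ` ?T"
    then obtain K where K: "K \<subseteq> {0..<n}" "card K = t" "inj_on (\<lambda>a. a mod l) K" "K' = f ` K"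
      by (auto simp: ksubsets_def)
    have "card K' = t" using K inj_on_subset[OF inj K(1)] by (simp add: card_image)
    moreover have "clique G K'"
      unfolding clique_def
    proof (intro ballI impI)
      fix x y assume "x \<in> K'" "y \<in> K'" "x \<noteq> y"
      then obtain a b where ab: "a \<in> K" "b \<in> K" "x = f a" "y = f b" "a \<noteq> b" using K by auto
      then have "a mod l \<noteq> b mod l" using K(3) by (auto simp: inj_on_def)
      moreover have "a < n" "b < n" using ab K(1) by auto
      ultimately show "G x y" using E ab by simp
    qed
    ultimately show "K' \<in> cliques G {0..<n} t" using K im by (auto simp: cliques_def ksubsets_def)
  qed
  show "finite (cliques G {0..<n} t)"
    by (rule finite_cliques) simp
qed

section \<open>Graphs defined by an open interpretation\<close>

lemma sat_cong: "(\<And>i. i \<in> fv \<phi> \<Longrightarrow> \<rho> i = \<rho>' i) \<Longrightarrow> sat M \<rho> \<phi> = sat M \<rho>' \<phi>"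
  by (induction \<phi>) (simp_all cong: map_cong)

definition map_struc :: "('v \<Rightarrow> 'w) \<Rightarrow> ('p, 'v) struc \<Rightarrow> ('p, 'w) struc" where
  "map_struc h M = (h ` fst M, \<lambda>P. map h ` snd M P)"

lemma sat_map_struc_restrict:
  assumes inj: "inj_on h U"
  shows "(\<And>i. i \<in> fv \<phi> \<Longrightarrow> \<rho> i \<in> U) \<Longrightarrow> sat (map_struc h (restrict_struc N U)) (h \<circ> \<rho>) \<phi> = sat N \<rho> \<phi>"
proof (induction \<phi>)
  case (Atom P xs)
  have sU: "set (map \<rho> xs) \<subseteq> U" using Atom by auto
  have "sat (map_struc h (restrict_struc N U)) (h \<circ> \<rho>) (Atom P xs) \<longleftrightarrow>
      (\<exists>ys. ys \<in> snd N P \<and> set ys \<subseteq> U \<and> map h (map \<rho> xs) = map h ys)"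
    by (auto simp: map_struc_def restrict_struc_def)
  also have "\<dots> \<longleftrightarrow> (\<exists>ys. ys \<in> snd N P \<and> set ys \<subseteq> U \<and> map \<rho> xs = ys)"
  proof -
    have "map h (map \<rho> xs) = map h ys \<longleftrightarrow> map \<rho> xs = ys" if "set ys \<subseteq> U" for ys
      using inj_on_map_eq_map[OF inj_on_subset[OF inj, of "set (map \<rho> xs) \<union> set ys"]] sU that by auto
    then show ?thesis by blast
  qed
  also have "\<dots> \<longleftrightarrow> sat N \<rho> (Atom P xs)" using sU by auto
  finally show ?case .
next
  case (Eq i j)
  then have "\<rho> i \<in> U" "\<rho> j \<in> U" by auto
  then show ?case using inj by (auto simp: inj_on_def)
qed auto

lemma is_model_map_struc_restrict:
  assumes N: "is_model ar T N" and U: "U \<subseteq> fst N" and inj: "inj_on h U"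
  shows "is_model ar T (map_struc h (restrict_struc N U))" (is "is_model ar T ?N'")
proof -
  have "is_struc ar ?N'"
    using N unfolding is_model_def is_struc_def map_struc_def restrict_struc_def by auto
  moreover have "sat ?N' \<rho>' f" if f: "f \<in> T" and \<rho>': "range \<rho>' \<subseteq> fst ?N'" for f \<rho>'
  proof -
    define \<rho> where "\<rho> = inv_into U h \<circ> \<rho>'"
    have \<rho>'U: "\<rho>' i \<in> h ` U" for i
      using \<rho>' by (auto simp: map_struc_def restrict_struc_def)
    then have \<rho>U: "\<rho> i \<in> U" for i by (simp add: \<rho>_def inv_into_into)
    have "h \<circ> \<rho> = \<rho>'" using \<rho>'U by (auto simp: \<rho>_def f_inv_into_f)
    moreover have "range \<rho> \<subseteq> fst N" using \<rho>U U by auto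
    then have "sat N \<rho> f"
      using N f by (auto simp: is_model_def)
    ultimately show ?thesis
      using sat_map_struc_restrict[OF inj, of f \<rho> N] \<rho>U by simp
  qed
  ultimately show ?thesis by (simp add: is_model_def)
qed

definition interp_edge :: "(unit \<Rightarrow> 'p qf) \<Rightarrow> ('p, 'v) struc \<Rightarrow> 'v \<Rightarrow> 'v \<Rightarrow> bool" where
  "interp_edge I N a b \<longleftrightarrow> [a, b] \<in> snd (interp ar_graph I N) ()"

lemma interp_edge_iff:
  "interp_edge I N a b \<longleftrightarrow> a \<noteq> b \<and> a \<in> fst N \<and> b \<in> fst N \<and> sat N (\<lambda>i. [a, b] ! i) (I ())"
  by (auto simp: interp_edge_def interp_def ar_graph_def)

lemma interp_edge_map_struc_restrict:
  assumes fvI: "fv (I ()) \<subseteq> {..<2}" and inj: "inj_on h U" and U: "U \<subseteq> fst N" and ab: "a \<in> U" "b \<in> U"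
  shows "interp_edge I (map_struc h (restrict_struc N U)) (h a) (h b) \<longleftrightarrow> interp_edge I N a b"
proof -
  have args: "i \<in> fv (I ()) \<Longrightarrow> [h a, h b] ! i = (h \<circ> (\<lambda>i. [a, b] ! i)) i \<and> [a, b] ! i \<in> U" for i
    using fvI ab by (cases i) auto
  have "sat (map_struc h (restrict_struc N U)) (\<lambda>i. [h a, h b] ! i) (I ()) \<longleftrightarrow>
      sat (map_struc h (restrict_struc N U)) (h \<circ> (\<lambda>i. [a, b] ! i)) (I ())"
    using args by (intro sat_cong) auto
  also have "\<dots> \<longleftrightarrow> sat N (\<lambda>i. [a, b] ! i) (I ())"
    using args by (intro sat_map_struc_restrict[OF inj]) auto
  finally show ?thesis
    using inj ab U by (auto simp: interp_edge_iff map_struc_def restrict_struc_def inj_on_def)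
qed

text \<open>Models of a universal theory are closed under induced substructures; relabel onto \<open>{0..<k}\<close>.\<close>

lemma ex_model_on_subset:
  assumes N: "N \<in> models_n ar T n" and U: "U \<subseteq> {0..<n}" "card U = k" and fvI: "fv (I ()) \<subseteq> {..<2}"
  obtains N' h where "N' \<in> models_n ar T k" "bij_betw h U {0..<k}"
    "\<And>a b. a \<in> U \<Longrightarrow> b \<in> U \<Longrightarrow> interp_edge I N' (h a) (h b) \<longleftrightarrow> interp_edge I N a b"
proof -
  have "finite U" using U(1) finite_subset by blast
  then obtain h where h: "bij_betw h U {0..<k}"
    using ex_bij_betw_finite_nat U(2) by blast
  define N' where "N' = map_struc h (restrict_struc N U)"
  have UN: "U \<subseteq> fst N" "is_model ar T N" using N U by (auto simp: models_n_def)
  have "N' \<in> models_n ar T k"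
    using is_model_map_struc_restrict[OF UN(2) UN(1) bij_betw_imp_inj_on[OF h]] h
    by (simp add: models_n_def N'_def map_struc_def restrict_struc_def bij_betw_def)
  then show thesis
    using that h interp_edge_map_struc_restrict[where I = I, OF fvI bij_betw_imp_inj_on[OF h] UN(1)]
    by (simp add: N'_def)
qed

lemma isomorphic_complete_graph_iff_clique:
  assumes U: "U \<subseteq> fst N" "finite U" "card U = t"
  shows "isomorphic (restrict_struc (interp ar_graph I N) U) (complete_graph t) \<longleftrightarrow> clique (interp_edge I N) U"
proof
  assume "isomorphic (restrict_struc (interp ar_graph I N) U) (complete_graph t)"
  then obtain f where f: "bij_betw f U {0..<t}"
    and pres: "\<And>P xs. set xs \<subseteq> U \<Longrightarrow>
      xs \<in> snd (restrict_struc (interp ar_graph I N) U) P \<longleftrightarrow> map f xs \<in> snd (complete_graph t) P"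
    unfolding isomorphic_def by (auto simp: restrict_struc_def complete_graph_def)
  show "clique (interp_edge I N) U"
    unfolding clique_def
  proof (intro ballI impI)
    fix a b assume ab: "a \<in> U" "b \<in> U" "a \<noteq> b"
    then have "map f [a, b] \<in> snd (complete_graph t) ()"
      using f by (auto simp: complete_graph_def bij_betw_def inj_on_def)
    then have "[a, b] \<in> snd (restrict_struc (interp ar_graph I N) U) ()"
      using pres[of "[a, b]" "()"] ab by simp
    then show "interp_edge I N a b" by (simp add: interp_edge_def restrict_struc_def)
  qed
next
  assume cl: "clique (interp_edge I N) U"
  obtain f where f: "bij_betw f U {0..<t}" using ex_bij_betw_finite_nat[OF U(2)] U(3) by blast
  then have fU: "f a < t" if "a \<in> U" for a
    using that by (auto simp: bij_betw_def)
  have "xs \<in> snd (restrict_struc (interp ar_graph I N) U) P \<longleftrightarrow> map f xs \<in> snd (complete_graph t) P"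
    if xs: "set xs \<subseteq> U" for P xs
  proof -
    have "xs \<in> snd (restrict_struc (interp ar_graph I N) U) P \<longleftrightarrow> (\<exists>a b. xs = [a, b] \<and> interp_edge I N a b)"
      using xs by (auto simp: restrict_struc_def interp_edge_def interp_def ar_graph_def length_Suc_conv
          numeral_2_eq_2)
    also have "\<dots> \<longleftrightarrow> (\<exists>a b. xs = [a, b] \<and> a \<noteq> b)"
      using cl xs by (auto simp: clique_def interp_edge_iff)
    also have "\<dots> \<longleftrightarrow> map f xs \<in> snd (complete_graph t) P"
      using f fU xs by (auto simp: complete_graph_def bij_betw_def inj_on_def map_eq_Cons_conv)
    finally show ?thesis .
  qed
  then show "isomorphic (restrict_struc (interp ar_graph I N) U) (complete_graph t)"
    using f unfolding isomorphic_def by (auto simp: restrict_struc_def complete_graph_def)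
qed

lemma ind_density_complete_graph:
  assumes "fst N = {0..<n}"
  shows "ind_density (complete_graph t) (interp ar_graph I N)
    = real (card (cliques (interp_edge I N) {0..<n} t)) / real (n choose t)"
proof -
  have "{U. U \<subseteq> {0..<n} \<and> card U = t \<and> isomorphic (restrict_struc (interp ar_graph I N) U) (complete_graph t)}
      = cliques (interp_edge I N) {0..<n} t"
    using assms isomorphic_complete_graph_iff_clique[of _ N t I]
    by (auto simp: cliques_def ksubsets_def intro: finite_subset)
  then show ?thesis
    using assms by (simp add: ind_density_def interp_def complete_graph_def)
qed

lemma subgraph_turan_graph_iff:
  assumes "fst N = {0..<n}"
  shows "subgraph (turan_graph n l) (interp ar_graph I N) \<longleftrightarrow> (\<exists>f. inj_on f {0..<n} \<and> f ` {0..<n} \<subseteq> {0..<n}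
    \<and> (\<forall>a b. a < n \<longrightarrow> b < n \<longrightarrow> a mod l \<noteq> b mod l \<longrightarrow> interp_edge I N (f a) (f b)))"
  using assms unfolding subgraph_def turan_graph_def interp_edge_def by (auto simp: interp_def)

lemma ex_residue_enumeration_of_blocks:
  assumes P: "disjoint_blocks V c m P" and fin: "finite V" and c: "c > 0"
  obtains \<phi> where "inj_on \<phi> {0..<m}" "\<And>a. a < m \<Longrightarrow> \<phi> a \<in> P (a mod c)"
proof -
  define e where "e = (\<lambda>i. SOME h. bij_betw h {0..<m} (P i))"
  have e: "bij_betw (e i) {0..<m} (P i)" if "i < c" for i
  proof -
    have "finite (P i)" "card (P i) = m"
      using P fin that by (auto simp: disjoint_blocks_def intro: finite_subset)
    then have "\<exists>h. bij_betw h {0..<m} (P i)"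
      by (metis atLeast0LessThan ex_bij_betw_nat_finite)
    then show ?thesis unfolding e_def by (rule someI_ex)
  qed
  define \<phi> where "\<phi> = (\<lambda>a. e (a mod c) (a div c))"
  have \<phi>P: "\<phi> a \<in> P (a mod c)" if "a < m" for a
  proof -
    have "a div c < m" using that c by (meson div_le_dividend le_less_trans)
    then show ?thesis using e[of "a mod c"] c by (auto simp: \<phi>_def bij_betw_def)
  qed
  moreover have "inj_on \<phi> {0..<m}"
  proof (rule inj_onI)
    fix a b assume a: "a \<in> {0..<m}" and b: "b \<in> {0..<m}" and eq: "\<phi> a = \<phi> b"
    have same: "a mod c = b mod c"
      using P \<phi>P[of a] \<phi>P[of b] a b eq c unfolding disjoint_blocks_def
      by (metis atLeastLessThan_iff disjoint_iff mod_less_divisor)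
    have "a div c < m" "b div c < m" using a b c by (auto intro: le_less_trans div_le_dividend)
    moreover have "e (a mod c) (a div c) = e (a mod c) (b div c)" using eq same by (simp add: \<phi>_def)
    ultimately have "a div c = b div c" using e[of "a mod c"] c by (auto simp: bij_betw_def inj_on_def)
    then show "a = b" using same by (metis div_mult_mod_eq)
  qed
  ultimately show thesis using that by blast
qed

text \<open>The blow-up of \<open>K\<^sub>c\<close> contains \<open>T(m, c)\<close>, and its induced substructure is again a model.\<close>

lemma subgraph_turan_graph_if_complete_blocks:
  assumes N: "N \<in> models_n ar T n" and fvI: "fv (I ()) \<subseteq> {..<2}" and c: "c > 0"
    and P: "disjoint_blocks {0..<n} c m P" and E: "complete_between_blocks (interp_edge I N) c P"
  shows "\<exists>N'\<in>models_n ar T m. subgraph (turan_graph m c) (interp ar_graph I N')"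
proof -
  obtain \<phi> where inj\<phi>: "inj_on \<phi> {0..<m}" and \<phi>P: "\<And>a. a < m \<Longrightarrow> \<phi> a \<in> P (a mod c)"
    using ex_residue_enumeration_of_blocks[OF P _ c] by blast
  define U where "U = \<phi> ` {0..<m}"
  have U: "U \<subseteq> {0..<n}"
  proof
    fix x assume "x \<in> U"
    then obtain a where "a < m" "x = \<phi> a" by (auto simp: U_def)
    moreover have "a mod c < c" using c by simp
    ultimately show "x \<in> {0..<n}"
      using \<phi>P P unfolding disjoint_blocks_def by blast
  qed
  have "card U = m" using inj\<phi> by (simp add: U_def card_image)
  obtain N' h where N': "N' \<in> models_n ar T m" and h: "bij_betw h U {0..<m}"
    and edges: "\<And>a b. a \<in> U \<Longrightarrow> b \<in> U \<Longrightarrow> interp_edge I N' (h a) (h b) \<longleftrightarrow> interp_edge I N a b"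
    using ex_model_on_subset[where I = I, OF N U \<open>card U = m\<close> fvI] by blast
  have "interp_edge I N' ((h \<circ> \<phi>) a) ((h \<circ> \<phi>) b)" if "a < m" "b < m" "a mod c \<noteq> b mod c" for a b
  proof -
    have "a mod c < c" "b mod c < c" using c by simp_all
    then have "interp_edge I N (\<phi> a) (\<phi> b)"
      using E \<phi>P[OF that(1)] \<phi>P[OF that(2)] that(3) unfolding complete_between_blocks_def by blast
    then show ?thesis using edges that by (simp add: U_def)
  qed
  moreover have "inj_on (h \<circ> \<phi>) {0..<m}" "(h \<circ> \<phi>) ` {0..<m} \<subseteq> {0..<m}"
    using inj\<phi> h by (auto simp: U_def bij_betw_def intro: comp_inj_on)
  moreover have "fst N' = {0..<m}" using N' by (simp add: models_n_def)
  ultimately have "subgraph (turan_graph m c) (interp ar_graph I N')"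
    by (subst subgraph_turan_graph_iff) (auto intro!: exI[of _ "h \<circ> \<phi>"])
  then show ?thesis using N' by blast
qed

section \<open>The Tur\'an density of an open interpretation\<close>

text \<open>The set whose supremum defines \<open>\<chi>(I) - 1\<close>.\<close>

definition turan_parts :: "('p \<Rightarrow> nat) \<Rightarrow> 'p qf set \<Rightarrow> (unit \<Rightarrow> 'p qf) \<Rightarrow> nat set" where
  "turan_parts ar T I =
     {l. l \<ge> 1 \<and> (\<forall>n. \<exists>N\<in>models_n ar T n. subgraph (turan_graph n l) (interp ar_graph I N))}"

lemma Sup_insert_zero_enat_image:
  fixes S :: "nat set"
  shows "Sup (insert 0 (enat ` S)) = (if S = {} then 0 else if finite S then enat (Max S) else \<infinity>)"
proof (cases "finite S")
  case True
  show ?thesis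
  proof (cases "S = {}")
    case False
    have "Max (insert 0 (enat ` S)) = enat (Max S)"
      using True False by (intro Max_eqI) (auto simp: zero_enat_def)
    then show ?thesis using True False by (simp add: Sup_enat_def)
  qed (simp add: Sup_enat_def)
next
  case False
  then have "infinite (insert 0 (enat ` S))" by (auto dest: finite_imageD simp: inj_on_def)
  then show ?thesis using False by (auto simp: Sup_enat_def)
qed

lemma chi_eq:
  "chi ar T I = (if turan_parts ar T I = {} then 1
    else if finite (turan_parts ar T I) then enat (Suc (Max (turan_parts ar T I))) else \<infinity>)"
proof -
  have "chi ar T I = Sup (insert 0 (enat ` turan_parts ar T I)) + 1"
    by (simp add: chi_def turan_parts_def)
  then show ?thesis
    unfolding Sup_insert_zero_enat_image by (simp add: one_enat_def)
qed

lemma turan_seq_eq: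
  "turan_seq ar T I t n = (SUP N\<in>models_n ar T n.
     ereal (real (card (cliques (interp_edge I N) {0..<n} t)) / real (n choose t)))"
  unfolding turan_seq_def by (rule SUP_cong) (auto simp: models_n_def ind_density_complete_graph)

lemma clique_density_le_turan_seq:
  "N \<in> models_n ar T n \<Longrightarrow>
     ereal (real (card (cliques (interp_edge I N) {0..<n} t)) / real (n choose t)) \<le> turan_seq ar T I t n"
  unfolding turan_seq_eq by (rule SUP_upper)

lemma turan_seq_le_one: "turan_seq ar T I t n \<le> 1"
  unfolding turan_seq_eq
proof (rule SUP_least)
  fix N
  have "real (card (cliques (interp_edge I N) {0..<n} t)) \<le> real (n choose t)"
    using card_cliques_le[of "{0..<n}"] by simp
  then have "real (card (cliques (interp_edge I N) {0..<n} t)) / real (n choose t) \<le> 1"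
    by (cases "n choose t = 0") (simp_all add: divide_le_eq_1)
  then show "ereal (real (card (cliques (interp_edge I N) {0..<n} t)) / real (n choose t)) \<le> 1"
    by simp
qed

lemma models_n_empty_mono:
  assumes "models_n ar T n0 = {}" "n0 \<le> n"
  shows "models_n ar T n = {}"
proof (rule ccontr)
  assume "models_n ar T n \<noteq> {}"
  then obtain N where "is_model ar T N" "fst N = {0..<n}" by (auto simp: models_n_def)
  then have "is_model ar T (map_struc id (restrict_struc N {0..<n0}))"
    using assms(2) by (intro is_model_map_struc_restrict) auto
  moreover have "fst (map_struc id (restrict_struc N {0..<n0})) = {0..<n0}"
    by (simp add: map_struc_def restrict_struc_def)
  ultimately have "map_struc id (restrict_struc N {0..<n0}) \<in> models_n ar T n0"
    by (simp add: models_n_def)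
  then show False using assms(1) by blast
qed

text \<open>\<open>T(n, 1)\<close> has no edges, so \<open>1 \<notin> turan_parts ar T I\<close> means that \<open>T\<close> has no models of some
  size, hence of any larger size.\<close>

lemma turan_seq_eventually_bot:
  assumes "turan_parts ar T I = {}"
  shows "eventually (\<lambda>n. turan_seq ar T I t n = -\<infinity>) sequentially"
proof -
  have "1 \<notin> turan_parts ar T I" using assms by simp
  then have "\<not> (\<forall>n. \<exists>N\<in>models_n ar T n. subgraph (turan_graph n 1) (interp ar_graph I N))"
    by (simp add: turan_parts_def)
  then obtain n0 where n0: "\<And>N. N \<in> models_n ar T n0 \<Longrightarrow> \<not> subgraph (turan_graph n0 1) (interp ar_graph I N)"
    by blast
  have "subgraph (turan_graph n0 1) (interp ar_graph I N)" if "N \<in> models_n ar T n0" for N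
  proof -
    have fN: "fst N = {0..<n0}" using that by (simp add: models_n_def)
    have "\<exists>f. inj_on f {0..<n0} \<and> f ` {0..<n0} \<subseteq> {0..<n0}
        \<and> (\<forall>a b. a < n0 \<longrightarrow> b < n0 \<longrightarrow> a mod 1 \<noteq> b mod 1 \<longrightarrow> interp_edge I N (f a) (f b))"
      by (intro exI[of _ id]) simp
    then show ?thesis using subgraph_turan_graph_iff[OF fN] by blast
  qed
  then have "models_n ar T n0 = {}" using n0 by blast
  then have "models_n ar T n = {}" if "n0 \<le> n" for n
    using that by (rule models_n_empty_mono)
  then show ?thesis
    unfolding eventually_sequentially by (intro exI[of _ n0]) (auto simp: turan_seq_eq bot_ereal_def)
qed

lemma turan_seq_eventually_one:
  assumes "infinite (turan_parts ar T I)"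
  shows "eventually (\<lambda>n. turan_seq ar T I t n = 1) sequentially"
  unfolding eventually_sequentially
proof (intro exI[of _ t] allI impI antisym[OF turan_seq_le_one])
  fix n assume "t \<le> n"
  obtain l where l: "l \<in> turan_parts ar T I" "n \<le> l"
    using assms infinite_nat_iff_unbounded_le by blast
  then have "\<exists>N\<in>models_n ar T n. subgraph (turan_graph n l) (interp ar_graph I N)"
    by (simp add: turan_parts_def)
  then obtain N where N: "N \<in> models_n ar T n" and "subgraph (turan_graph n l) (interp ar_graph I N)"
    by blast
  then obtain f where f: "inj_on f {0..<n}" "f ` {0..<n} \<subseteq> {0..<n}"
    "\<And>a b. a < n \<Longrightarrow> b < n \<Longrightarrow> a mod l \<noteq> b mod l \<Longrightarrow> interp_edge I N (f a) (f b)"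
    by (auto simp: subgraph_turan_graph_iff models_n_def)
  have "inj_on (\<lambda>a. a mod l) K" if "K \<subseteq> {0..<n}" for K
  proof (rule inj_onI)
    fix a b assume "a \<in> K" "b \<in> K" "a mod l = b mod l"
    moreover have "a < l" "b < l" using \<open>a \<in> K\<close> \<open>b \<in> K\<close> that l(2) by auto
    ultimately show "a = b" by simp
  qed
  then have "{K \<in> ksubsets {0..<n} t. inj_on (\<lambda>a. a mod l) K} = ksubsets {0..<n} t"
    by (auto simp: ksubsets_def)
  then have "card (ksubsets {0..<n} t) \<le> card (cliques (interp_edge I N) {0..<n} t)"
    using card_residue_transversals_le_cliques[where G = "interp_edge I N" and l = l and t = t, OF f] by simp
  then have "n choose t \<le> card (cliques (interp_edge I N) {0..<n} t)"
    by (simp add: card_ksubsets)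
  then have "1 \<le> ereal (real (card (cliques (interp_edge I N) {0..<n} t)) / real (n choose t))"
    using \<open>t \<le> n\<close> by simp
  also have "\<dots> \<le> turan_seq ar T I t n"
    by (rule clique_density_le_turan_seq[OF N])
  finally show "1 \<le> turan_seq ar T I t n" .
qed

lemma turan_graph_density_le_turan_seq:
  assumes "l \<in> turan_parts ar T I"
  shows "ereal (real (l choose t) * real (n div l) ^ t / real (n choose t)) \<le> turan_seq ar T I t n"
proof -
  have "\<exists>N\<in>models_n ar T n. subgraph (turan_graph n l) (interp ar_graph I N)"
    using assms by (simp add: turan_parts_def)
  then obtain N where N: "N \<in> models_n ar T n" and "subgraph (turan_graph n l) (interp ar_graph I N)"
    by blast
  then obtain f where f: "inj_on f {0..<n}" "f ` {0..<n} \<subseteq> {0..<n}"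
    "\<And>a b. a < n \<Longrightarrow> b < n \<Longrightarrow> a mod l \<noteq> b mod l \<Longrightarrow> interp_edge I N (f a) (f b)"
    by (auto simp: subgraph_turan_graph_iff models_n_def)
  have "real (l choose t) * real (n div l) ^ t \<le> real (card (cliques (interp_edge I N) {0..<n} t))"
    using card_residue_transversals_ge[of l t n] card_residue_transversals_le_cliques[where G = "interp_edge I N" and l = l and t = t, OF f] assms
    by (simp add: turan_parts_def)
  then have "real (l choose t) * real (n div l) ^ t / real (n choose t)
      \<le> real (card (cliques (interp_edge I N) {0..<n} t)) / real (n choose t)"
    by (rule divide_right_mono) simp
  then have "ereal (real (l choose t) * real (n div l) ^ t / real (n choose t))
      \<le> ereal (real (card (cliques (interp_edge I N) {0..<n} t)) / real (n choose t))"
    by simp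
  also have "\<dots> \<le> turan_seq ar T I t n"
    by (rule clique_density_le_turan_seq[OF N])
  finally show ?thesis .
qed

text \<open>A model of size \<open>n\<close> with clique density above \<open>turan_density r t + \<epsilon>\<close> contains a blow-up of
  \<open>K\<^sub>r\<^sub>+\<^sub>1\<close> with parts of size \<open>n0\<close>, hence a model of size \<open>n0\<close> containing \<open>T(n0, r + 1)\<close>.\<close>

lemma eventually_turan_seq_le:
  assumes r: "r \<ge> 1" and no_parts: "Suc r \<notin> turan_parts ar T I"
    and fvI: "fv (I ()) \<subseteq> {..<2}" and \<epsilon>: "\<epsilon> > 0"
  shows "eventually (\<lambda>n. turan_seq ar T I t n \<le> ereal (turan_density r t + \<epsilon>)) sequentially"
proof -
  have "\<not> (\<forall>n. \<exists>N\<in>models_n ar T n. subgraph (turan_graph n (Suc r)) (interp ar_graph I N))"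
    using no_parts by (simp add: turan_parts_def)
  then obtain n0 where n0: "\<And>N. N \<in> models_n ar T n0 \<Longrightarrow> \<not> subgraph (turan_graph n0 (Suc r)) (interp ar_graph I N)"
    by blast
  obtain n1 where n1: "\<forall>(V :: nat set) G. finite V \<and> n1 \<le> card V
      \<and> (turan_density r t + \<epsilon>) * real (card V choose t) \<le> real (card (cliques G V t))
      \<longrightarrow> (\<exists>P. disjoint_blocks V (Suc r) n0 P \<and> complete_between_blocks G (Suc r) P)"
    using erdos_stone_cliques[OF r \<epsilon>] by blast
  have "turan_seq ar T I t n \<le> ereal (turan_density r t + \<epsilon>)" if n: "n1 + t \<le> n" for n
    unfolding turan_seq_eq
  proof (rule SUP_least)
    fix N assume N: "N \<in> models_n ar T n"
    have "real (card (cliques (interp_edge I N) {0..<n} t)) / real (n choose t) \<le> turan_density r t + \<epsilon>"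
    proof (rule ccontr)
      assume "\<not> ?thesis"
      moreover have "real (n choose t) > 0" using n by simp
      ultimately have "(turan_density r t + \<epsilon>) * real (card {0..<n} choose t)
          \<le> real (card (cliques (interp_edge I N) {0..<n} t))"
        by (simp add: field_simps)
      then obtain P where "disjoint_blocks {0..<n} (Suc r) n0 P"
        "complete_between_blocks (interp_edge I N) (Suc r) P"
        using n1[rule_format, of "{0..<n}" "interp_edge I N"] n by auto
      then show False
        using subgraph_turan_graph_if_complete_blocks[where I = I, OF N fvI] n0 by blast
    qed
    then show "ereal (real (card (cliques (interp_edge I N) {0..<n} t)) / real (n choose t))
        \<le> ereal (turan_density r t + \<epsilon>)"
      by simp
  qed
  then show ?thesis
    unfolding eventually_sequentially by blast
qed

lemma tendsto_ereal_if_eventually_between: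
  assumes "\<And>\<epsilon>. \<epsilon> > 0 \<Longrightarrow> eventually (\<lambda>x. ereal (c - \<epsilon>) \<le> f x \<and> f x \<le> ereal (c + \<epsilon>)) F"
  shows "(f \<longlongrightarrow> ereal c) F"
proof (rule order_tendstoI)
  fix a assume "a < ereal c"
  then obtain y where y: "a < ereal y" "y < c" using ereal_dense2 less_ereal.simps(1) by blast
  have "c - y > 0" using y by simp
  from assms[OF this] show "eventually (\<lambda>x. a < f x) F"
    by eventually_elim (use y in \<open>auto intro: less_le_trans\<close>)
next
  fix a assume "ereal c < a"
  then obtain y where y: "ereal y < a" "c < y" using ereal_dense2 less_ereal.simps(1) by blast
  have "y - c > 0" using y by simp
  from assms[OF this] show "eventually (\<lambda>x. f x < a) F"
    by eventually_elim (use y in \<open>auto intro: le_less_trans\<close>)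
qed

lemma turan_seq_tendsto_turan_density:
  assumes r: "r \<in> turan_parts ar T I" and no_parts: "Suc r \<notin> turan_parts ar T I"
    and fvI: "fv (I ()) \<subseteq> {..<2}"
  shows "turan_seq ar T I t \<longlonglongrightarrow> ereal (turan_density r t)"
proof (rule tendsto_ereal_if_eventually_between)
  fix \<epsilon> :: real assume \<epsilon>: "\<epsilon> > 0"
  have r1: "r \<ge> 1" using r by (simp add: turan_parts_def)
  show "eventually (\<lambda>n. ereal (turan_density r t - \<epsilon>) \<le> turan_seq ar T I t n
      \<and> turan_seq ar T I t n \<le> ereal (turan_density r t + \<epsilon>)) sequentially"
    using eventually_turan_density_le[OF r1 \<epsilon>, of t] eventually_turan_seq_le[OF r1 no_parts fvI \<epsilon>, of t]
  proof eventually_elim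
    case (elim n)
    have "ereal (turan_density r t - \<epsilon>) \<le> ereal (real (r choose t) * real (n div r) ^ t / real (n choose t))"
      using elim(1) by simp
    also have "\<dots> \<le> turan_seq ar T I t n"
      by (rule turan_graph_density_le_turan_seq[OF r])
    finally show ?case using elim(2) by simp
  qed
qed

lemma turan_density_eq_prod:
  assumes "r \<ge> 1" "t \<ge> 1"
  shows "turan_density r t = (\<Prod>j = 1..t - 1. 1 - real j / (real (Suc r) - 1))"
proof -
  have "turan_density r t = (\<Prod>i = 0..<t. real r - real i) / real r ^ t"
    by (simp add: turan_density_def binomial_mult_fact)
  also have "\<dots> = (\<Prod>i = 0..<t. (real r - real i) / real r)"
    by (simp add: prod_dividef)
  also have "\<dots> = (\<Prod>i = 0..<t. 1 - real i / real r)"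
    using assms(1) by (intro prod.cong) (simp_all add: field_simps)
  also have "\<dots> = (\<Prod>i\<in>insert 0 {1..t - 1}. 1 - real i / real r)"
    using assms(2) by (intro prod.cong) auto
  also have "\<dots> = (\<Prod>i = 1..t - 1. 1 - real i / real r)"
    by (subst prod.insert) auto
  finally show ?thesis by simp
qed

theorem theorem3p1:
  fixes ar :: "'p::finite \<Rightarrow> nat" and T :: "'p qf set" and I :: "unit \<Rightarrow> 'p qf" and t :: nat
  assumes "language ar"
    and "canonical_theory ar T"
    and "open_interp ar_graph ar T_Graph T I"
    and "t \<ge> 1"
  shows "(turan_seq ar T I t \<longlongrightarrow>
           (if chi ar T I \<ge> 2 then
              (case chi ar T I of
                 \<infinity> \<Rightarrow> 1
               | enat c \<Rightarrow> ereal (\<Prod>j = 1..t - 1. 1 - real j / (real c - 1)))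
            else -\<infinity>)) sequentially"
proof -
  let ?S = "turan_parts ar T I"
  have fvI: "fv (I ()) \<subseteq> {..<2}" using assms(3) by (auto simp: open_interp_def ar_graph_def)
  consider "?S = {}" | "infinite ?S" | "finite ?S" "?S \<noteq> {}" by blast
  then show ?thesis
  proof cases
    case 1
    with turan_seq_eventually_bot[OF 1] show ?thesis
      by (simp add: chi_eq tendsto_eventually)
  next
    case 2
    with turan_seq_eventually_one[OF 2] show ?thesis
      by (auto simp: chi_eq tendsto_eventually)
  next
    case 3
    define r where "r = Max ?S"
    have r: "r \<in> ?S" "Suc r \<notin> ?S"
      using Max_in[OF 3] Max_ge[OF 3(1), of "Suc r"] unfolding r_def[symmetric] by auto
    then have "r \<ge> 1" by (simp add: turan_parts_def)
    with 3 turan_seq_tendsto_turan_density[OF r fvI, of t] show ?thesis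
      using turan_density_eq_prod[OF \<open>r \<ge> 1\<close> assms(4)] by (simp add: chi_eq r_def[symmetric] numeral_eq_enat)
  qed
qed

end
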